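(* Let $\mathcal{R}$ be a rectangular domain of the basic hexagonal model consisting of $n$ cells, with given initial values $x(c,0),y(c,0)\in\mathbb{N}$ for every cell $c$. Suppose that at time $0$ all cells along the right boundary of $\mathcal{R}$ are on fire and all cells along the left boundary of $\mathcal{R}$ (the village) have to be protected. Let $Y$ be the maximum, over all cells $c\in\mathcal{R}$, of the sum of the $y(\cdot,0)$-values of the direct neighbours of $c$. Then the minimum integer $k$ for which a protecting path for $k$ exists can be found in time $O(n\log n\log Y)$.
   Context: Basic hexagonal model: the plane (here a rectangular region $\mathcal{R}$ of it) is partitioned into hexagonal cells; two cells are direct neighbours if they share an edge (only cells of $\mathcal{R}$ count). The state of cell $c$ at time $t\in\mathbb{N}$ is a pair of non-negative integers $x(c,t)$ (resistance against ignition) and $y(c,t)$ (remaining fuel). Cell $c$ is burning at time $t$ if $x(c,t)=0$ and $y(c,t)>0$; alive if $x(c,t)>0$ and $y(c,t)>0$; dead if $y(c,t)=0$. Transition from $t$ to $t+1$: if $c$ is alive at time $t$, then $x(c,t+1)=\max\{x(c,t)-b,0\}$ where $b$ is the number of direct neighbours of $c$ burning at time $t$; if $c$ is burning at time $t$, then $y(c,t+1)=y(c,t)-1$; all other values stay unchanged. A cell is ignited (catches fire) when its $x$-value becomes $0$; putting a cell on fire at time $0$ means setting its $x$-value to $0$ at time $0$. A separating path is a path of cells (consecutive cells are direct neighbours) in $\mathcal{R}$ connecting the lower boundary to the upper boundary of $\mathcal{R}$. A separating path $\pi$ is a protecting path for $k$ if increasing the initial $x$-value of every cell on $\pi$ by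 $k$ (leaving all other cells unchanged) ensures that, when the cells on the right boundary are put on fire at time $0$, the fire never ignites any cell of the village. Running times are measured in a model where arithmetic on the cell values takes constant time. *)

theory Defs
  imports Complex_Main
begin

text \<open>A rectangular region with h rows and w columns; a cell is (row, column).
  Row 0 is the lower boundary, row h-1 the upper boundary, column 0 the left
  boundary (the village), column w-1 the right boundary.  Hexagons are laid out
  in "odd-row offset" coordinates: odd rows are shifted half a cell to the right.\<close>

type_synonym cell = "nat \<times> nat"

definition in_region :: "nat \<Rightarrow> nat \<Rightarrow> cell \<Rightarrow> bool" where
  "in_region h w c \<longleftrightarrow> fst c < h \<and> snd c < w"

definition hex_adj :: "cell \<Rightarrow> cell \<Rightarrow> bool" where
  "hex_adj c d \<longleftrightarrow>
     (fst d = fst c \<and> (snd d = snd c + 1 \<or> snd c = snd d + 1)) \<or>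
     ((fst d = fst c + 1 \<or> fst c = fst d + 1) \<and>
        (snd d = snd c \<or> (if odd (fst c) then snd d = snd c + 1 else snd c = snd d + 1)))"

definition nbrs :: "nat \<Rightarrow> nat \<Rightarrow> cell \<Rightarrow> cell set" where
  "nbrs h w c = {d. in_region h w d \<and> hex_adj c d}"

definition burning :: "(cell \<Rightarrow> nat) \<Rightarrow> (cell \<Rightarrow> nat) \<Rightarrow> cell \<Rightarrow> bool" where
  "burning x y c \<longleftrightarrow> x c = 0 \<and> 0 < y c"

definition alive :: "(cell \<Rightarrow> nat) \<Rightarrow> (cell \<Rightarrow> nat) \<Rightarrow> cell \<Rightarrow> bool" where
  "alive x y c \<longleftrightarrow> 0 < x c \<and> 0 < y c"

text \<open>conf h w x0 y0 t = (x(.,t), y(.,t)).  Natural-number subtraction truncates,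
  so x c - b = max (x c - b) 0.\<close>
fun conf :: "nat \<Rightarrow> nat \<Rightarrow> (cell \<Rightarrow> nat) \<Rightarrow> (cell \<Rightarrow> nat) \<Rightarrow> nat
              \<Rightarrow> (cell \<Rightarrow> nat) \<times> (cell \<Rightarrow> nat)" where
  "conf h w x0 y0 0 = (x0, y0)"
| "conf h w x0 y0 (Suc t) =
     (let (x, y) = conf h w x0 y0 t in
      ((\<lambda>c. if alive x y c then x c - card {d \<in> nbrs h w c. burning x y d} else x c),
       (\<lambda>c. if burning x y c then y c - 1 else y c)))"

definition separating_path :: "nat \<Rightarrow> nat \<Rightarrow> cell list \<Rightarrow> bool" where
  "separating_path h w p \<longleftrightarrow>
     p \<noteq> [] \<and> (\<forall>c\<in>set p. in_region h w c) \<and>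
     (\<forall>i. i + 1 < length p \<longrightarrow> hex_adj (p ! i) (p ! (i + 1))) \<and>
     fst (hd p) = 0 \<and> fst (last p) = h - 1"

definition start_x :: "nat \<Rightarrow> (cell \<Rightarrow> nat) \<Rightarrow> cell list \<Rightarrow> nat \<Rightarrow> cell \<Rightarrow> nat" where
  "start_x w x0 p k = (\<lambda>c. if snd c = w - 1 then 0
                             else if c \<in> set p then x0 c + k else x0 c)"

text \<open>A cell is ignited at time t+1 when its x-value becomes 0, i.e. it was positive
  at time t and is 0 at time t+1.\<close>
definition protecting_path ::
  "nat \<Rightarrow> nat \<Rightarrow> (cell \<Rightarrow> nat) \<Rightarrow> (cell \<Rightarrow> nat) \<Rightarrow> cell list \<Rightarrow> nat \<Rightarrow> bool" where
  "protecting_path h w x0 y0 p k \<longleftrightarrow>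
     separating_path h w p \<and>
     (\<forall>t c. in_region h w c \<and> snd c = 0 \<longrightarrow>
        \<not> (0 < fst (conf h w (start_x w x0 p k) y0 t) c \<and>
           fst (conf h w (start_x w x0 p k) y0 (Suc t)) c = 0))"

definition min_protect_k :: "nat \<Rightarrow> nat \<Rightarrow> (cell \<Rightarrow> nat) \<Rightarrow> (cell \<Rightarrow> nat) \<Rightarrow> nat" where
  "min_protect_k h w x0 y0 = (LEAST k. \<exists>p. protecting_path h w x0 y0 p k)"

definition Y_bound :: "nat \<Rightarrow> nat \<Rightarrow> (cell \<Rightarrow> nat) \<Rightarrow> nat" where
  "Y_bound h w y0 = Max {(\<Sum>d\<in>nbrs h w c. y0 d) | c. in_region h w c}"

text \<open>Arithmetic: addition, subtraction, halving, comparisons -- each unit cost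
  (no multiplication of two variables, to avoid the well-known excessive power of
  unit-cost RAMs with multiplication).\<close>

datatype aexp = Num int | Reg nat | Load aexp | Add aexp aexp | Sub aexp aexp | Half aexp
datatype bexp = Less aexp aexp | Eq aexp aexp | Not bexp
datatype com = Skip | Assign nat aexp | Store aexp aexp | Seq com com
  | If bexp com com | While bexp com

type_synonym state = "(nat \<Rightarrow> int) \<times> (int \<Rightarrow> int)"

fun aval :: "aexp \<Rightarrow> state \<Rightarrow> int" where
  "aval (Num i) s = i"
| "aval (Reg r) s = fst s r"
| "aval (Load a) s = snd s (aval a s)"
| "aval (Add a b) s = aval a s + aval b s"
| "aval (Sub a b) s = aval a s - aval b s"
| "aval (Half a) s = aval a s div 2"

fun bval :: "bexp \<Rightarrow> state \<Rightarrow> bool" where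
  "bval (Less a b) s = (aval a s < aval b s)"
| "bval (Eq a b) s = (aval a s = aval b s)"
| "bval (Not b) s = (\<not> bval b s)"

inductive big_step :: "com \<Rightarrow> state \<Rightarrow> nat \<Rightarrow> state \<Rightarrow> bool" where
  "big_step Skip s 1 s"
| "big_step (Assign r a) s 1 ((fst s)(r := aval a s), snd s)"
| "big_step (Store a e) s 1 (fst s, (snd s)(aval a s := aval e s))"
| "big_step c1 s t1 s' \<Longrightarrow> big_step c2 s' t2 s'' \<Longrightarrow> big_step (Seq c1 c2) s (t1 + t2) s''"
| "bval b s \<Longrightarrow> big_step c1 s t s' \<Longrightarrow> big_step (If b c1 c2) s (Suc t) s'"
| "\<not> bval b s \<Longrightarrow> big_step c2 s t s' \<Longrightarrow> big_step (If b c1 c2) s (Suc t) s'"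
| "\<not> bval b s \<Longrightarrow> big_step (While b c) s 1 s"
| "bval b s \<Longrightarrow> big_step c s t1 s' \<Longrightarrow> big_step (While b c) s' t2 s''
     \<Longrightarrow> big_step (While b c) s (Suc (t1 + t2)) s''"

text \<open>Input encoding: all registers 0; mem[0] = h, mem[1] = w,
  mem[2 + (i*w + j)] = x(( i,j),0), mem[2 + h*w + (i*w + j)] = y((i,j),0),
  all other memory cells 0.  Output: register 0.\<close>
definition input_state :: "nat \<Rightarrow> nat \<Rightarrow> (cell \<Rightarrow> nat) \<Rightarrow> (cell \<Rightarrow> nat) \<Rightarrow> state" where
  "input_state h w x0 y0 =
     ((\<lambda>_. 0),
      (\<lambda>a. if a = 0 then int h else if a = 1 then int w
           else if 2 \<le> a \<and> a < 2 + int (h * w) then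
             (let m = nat (a - 2) in int (x0 (m div w, m mod w)))
           else if 2 + int (h * w) \<le> a \<and> a < 2 + 2 * int (h * w) then
             (let m = nat (a - 2 - int (h * w)) in int (y0 (m div w, m mod w)))
           else 0))"

end

theory Submission
  imports Defs
begin

text \<open>The cells that eventually catch fire form the least fixed point of a monotone operator: a
  cell with fuel reaches resistance 0 iff its resistance is at most the total fuel of its
  neighbours that burn, because each of them burns exactly as long as it has fuel.  Since a
  separating path may visit every cell, a protecting path for k exists iff raising all cells by k
  keeps the village out of this fixed point; this is monotone in k and holds for k = Y.  Hence the
  least k is found by a binary search over the interval from 0 to the total fuel (at most n Y),
  where each test computes the fixed point with a linear-time worklist algorithm.\<close>

lemma hex_adj_sym: "hex_adj c d \<longleftrightarrow> hex_adj d c"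
  unfolding hex_adj_def by (auto split: if_splits)

lemma hex_adj_irrefl: "\<not> hex_adj c c"
  by (simp add: hex_adj_def)

lemma region_eq_product: "{c. in_region h w c} = {..<h} \<times> {..<w}"
  by (auto simp: in_region_def)

lemma finite_region: "finite {c. in_region h w c}"
  by (simp add: region_eq_product)

lemma card_region: "card {c. in_region h w c} = h * w"
  by (simp add: region_eq_product card_cartesian_product)

lemma finite_nbrs [simp]: "finite (nbrs h w c)"
  unfolding nbrs_def by (rule finite_subset[OF _ finite_region]) auto

lemma nbrs_in_region: "d \<in> nbrs h w c \<Longrightarrow> in_region h w d"
  by (simp add: nbrs_def)

lemma nbrs_sym: "in_region h w c \<Longrightarrow> d \<in> nbrs h w c \<Longrightarrow> c \<in> nbrs h w d"
  by (simp add: nbrs_def hex_adj_sym)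

lemma nbrs_fuel_le_Y_bound:
  assumes "in_region h w c"
  shows "(\<Sum>d\<in>nbrs h w c. y0 d) \<le> Y_bound h w y0"
  unfolding Y_bound_def
proof (rule Max_ge)
  have "{(\<Sum>d\<in>nbrs h w c. y0 d) | c. in_region h w c} = (\<lambda>c. \<Sum>d\<in>nbrs h w c. y0 d) ` {c. in_region h w c}"
    by auto
  then show "finite {(\<Sum>d\<in>nbrs h w c. y0 d) | c. in_region h w c}"
    using finite_region by simp
qed (use assms in blast)

section \<open>The burnt set as a least fixed point\<close>

text \<open>A cell with fuel eventually reaches resistance 0 iff its initial resistance is at most the
  total fuel of those neighbours that eventually burn: each of them burns for exactly as many
  steps as it has fuel, and lowers the resistance of the cell by one per step.\<close>

definition burn_step :: "nat \<Rightarrow> nat \<Rightarrow> (cell \<Rightarrow> nat) \<Rightarrow> (cell \<Rightarrow> nat) \<Rightarrow> cell set \<Rightarrow> cell set" where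
  "burn_step h w x0 y0 X = {d. in_region h w d \<and> 0 < y0 d \<and> x0 d \<le> (\<Sum>e\<in>nbrs h w d \<inter> X. y0 e)}"

definition burnt :: "nat \<Rightarrow> nat \<Rightarrow> (cell \<Rightarrow> nat) \<Rightarrow> (cell \<Rightarrow> nat) \<Rightarrow> cell set" where
  "burnt h w x0 y0 = lfp (burn_step h w x0 y0)"

lemma mono_burn_step: "mono (burn_step h w x0 y0)"
proof (rule monoI, rule subsetI)
  fix X Y d assume "X \<subseteq> Y" "d \<in> burn_step h w x0 y0 X"
  moreover have "(\<Sum>e\<in>nbrs h w d \<inter> X. y0 e) \<le> (\<Sum>e\<in>nbrs h w d \<inter> Y. y0 e)"
    using \<open>X \<subseteq> Y\<close> by (intro sum_mono2) auto
  ultimately show "d \<in> burn_step h w x0 y0 Y"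
    unfolding burn_step_def by auto
qed

lemma burnt_unfold: "burn_step h w x0 y0 (burnt h w x0 y0) = burnt h w x0 y0"
  unfolding burnt_def by (rule lfp_fixpoint[OF mono_burn_step])

lemma burnt_lowerbound: "burn_step h w x0 y0 X \<subseteq> X \<Longrightarrow> burnt h w x0 y0 \<subseteq> X"
  unfolding burnt_def by (rule lfp_lowerbound)

lemma burnt_iff:
  "d \<in> burnt h w x0 y0 \<longleftrightarrow>
     in_region h w d \<and> 0 < y0 d \<and> x0 d \<le> (\<Sum>e\<in>nbrs h w d \<inter> burnt h w x0 y0. y0 e)"
  by (subst burnt_unfold[symmetric]) (simp add: burn_step_def)

lemma burntD:
  assumes "d \<in> burnt h w x0 y0"
  shows "in_region h w d" "0 < y0 d" "x0 d \<le> (\<Sum>e\<in>nbrs h w d \<inter> burnt h w x0 y0. y0 e)"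
  using assms by (subst (asm) burnt_iff; simp)+

lemma burnt_antimono:
  assumes "\<And>c. in_region h w c \<Longrightarrow> x0 c \<le> x1 c"
  shows "burnt h w x1 y0 \<subseteq> burnt h w x0 y0"
proof (rule burnt_lowerbound, rule subsetI)
  fix d assume "d \<in> burn_step h w x1 y0 (burnt h w x0 y0)"
  then show "d \<in> burnt h w x0 y0"
    using assms[of d] by (subst burnt_iff) (auto simp: burn_step_def)
qed

locale fire_run =
  fixes h w :: nat and x0 y0 :: "cell \<Rightarrow> nat"
begin

definition x_at :: "nat \<Rightarrow> cell \<Rightarrow> nat" where
  "x_at t = fst (conf h w x0 y0 t)"

definition y_at :: "nat \<Rightarrow> cell \<Rightarrow> nat" where
  "y_at t = snd (conf h w x0 y0 t)"

abbreviation burning_at :: "nat \<Rightarrow> cell \<Rightarrow> bool" where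
  "burning_at t \<equiv> burning (x_at t) (y_at t)"

lemma x_at_0 [simp]: "x_at 0 = x0" and y_at_0 [simp]: "y_at 0 = y0"
  by (simp_all add: x_at_def y_at_def)

lemma x_at_Suc:
  "x_at (Suc t) c =
     (if alive (x_at t) (y_at t) c then x_at t c - card {d \<in> nbrs h w c. burning_at t d} else x_at t c)"
  by (simp add: x_at_def y_at_def case_prod_beta Let_def)

lemma y_at_Suc: "y_at (Suc t) c = (if burning_at t c then y_at t c - 1 else y_at t c)"
  by (simp add: x_at_def y_at_def case_prod_beta Let_def)

fun burn_count :: "nat \<Rightarrow> cell \<Rightarrow> nat" where
  "burn_count 0 c = 0"
| "burn_count (Suc t) c = burn_count t c + (if burning_at t c then 1 else 0)"

lemma y_at_add_burn_count: "y_at t c + burn_count t c = y0 c"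
  by (induction t) (auto simp: y_at_Suc burning_def)

lemma x_at_antimono: "s \<le> t \<Longrightarrow> x_at t c \<le> x_at s c"
  by (induction t rule: dec_induct) (auto simp: x_at_Suc intro: order_trans)

lemma y_at_antimono: "s \<le> t \<Longrightarrow> y_at t c \<le> y_at s c"
  by (induction t rule: dec_induct) (auto simp: y_at_Suc intro: order_trans)

lemma y_at_unignited: "0 < x_at t c \<Longrightarrow> y_at t c = y0 c"
proof (induction t)
  case (Suc t)
  then have "0 < x_at t c"
    using x_at_antimono[of t "Suc t" c] by linarith
  with Suc show ?case by (simp add: y_at_Suc burning_def)
qed simp

lemma x_at_no_fuel: "y0 c = 0 \<Longrightarrow> x_at t c = x0 c"
proof (induction t)
  case (Suc t)
  then have "y_at t c = 0" using y_at_add_burn_count[of t c] by simp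
  with Suc show ?case by (simp add: x_at_Suc alive_def)
qed simp

lemma x_at_eq_diff_burn_counts:
  assumes "0 < y0 c"
  shows "x_at t c = x0 c - (\<Sum>d\<in>nbrs h w c. burn_count t d)"
proof (induction t)
  case (Suc t)
  have card_eq:
    "card {d \<in> nbrs h w c. burning_at t d} = (\<Sum>d\<in>nbrs h w c. if burning_at t d then 1 else 0)"
    by (simp add: sum.If_cases Int_def)
  show ?case
  proof (cases "0 < x_at t c")
    case True
    then have "alive (x_at t) (y_at t) c"
      using y_at_unignited assms by (simp add: alive_def)
    with Suc card_eq show ?thesis by (simp add: x_at_Suc sum.distrib)
  next
    case False
    then have "x0 c \<le> (\<Sum>d\<in>nbrs h w c. burn_count t d)"
      using Suc.IH by simp
    also have "\<dots> \<le> (\<Sum>d\<in>nbrs h w c. burn_count (Suc t) d)"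
      by (intro sum_mono) simp
    finally show ?thesis
      using False Suc.IH by (simp add: x_at_Suc alive_def)
  qed
qed simp

lemma burn_count_pos: "0 < burn_count t e \<Longrightarrow> \<exists>s<t. burning_at s e"
  by (induction t) (auto split: if_splits intro: less_SucI)

lemma burn_count_eventually_full:
  assumes "x_at z e = 0"
  shows "\<forall>\<^sub>F t in sequentially. burn_count t e = y0 e"
proof -
  have fuel_left: "y_at (z + j) e \<le> y0 e - j" for j
  proof (induction j)
    case 0
    show ?case using y_at_add_burn_count[of z e] by simp
  next
    case (Suc j)
    have "x_at (z + j) e = 0"
      using x_at_antimono[of z "z + j" e] assms by simp
    with Suc show ?case by (auto simp: y_at_Suc burning_def)
  qed
  have "y_at (z + y0 e) e = 0"
    using fuel_left[of "y0 e"] by simp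
  then have "burn_count t e = y0 e" if "z + y0 e \<le> t" for t
    using y_at_antimono[OF that, of e] y_at_add_burn_count[of t e] by simp
  then show ?thesis
    unfolding eventually_sequentially by blast
qed

lemma zero_in_prefixpoint:
  assumes pre: "burn_step h w x0 y0 X \<subseteq> X"
  shows "in_region h w d \<Longrightarrow> 0 < y0 d \<Longrightarrow> x_at t d = 0 \<Longrightarrow> d \<in> X"
proof (induction t arbitrary: d)
  case 0
  then have "d \<in> burn_step h w x0 y0 X" by (simp add: burn_step_def)
  with pre show ?case by blast
next
  case (Suc t)
  have count_le: "burn_count (Suc t) e \<le> (if e \<in> X then y0 e else 0)" if e: "e \<in> nbrs h w d" for e
  proof (cases "burn_count (Suc t) e = 0")
    case False
    then obtain s where "s \<le> t" "burning_at s e"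
      using burn_count_pos[of "Suc t" e] by (auto simp: less_Suc_eq_le)
    then have "x_at t e = 0" "0 < y0 e"
      using x_at_antimono[of s t e] y_at_add_burn_count[of s e] by (auto simp: burning_def)
    then have "e \<in> X" using Suc.IH nbrs_in_region[OF e] by simp
    then show ?thesis using y_at_add_burn_count[of "Suc t" e] by simp
  qed (simp del: burn_count.simps)
  have "x0 d \<le> (\<Sum>e\<in>nbrs h w d. burn_count (Suc t) e)"
    using Suc.prems x_at_eq_diff_burn_counts[of d "Suc t"] by simp
  also have "\<dots> \<le> (\<Sum>e\<in>nbrs h w d. if e \<in> X then y0 e else 0)"
    using count_le by (rule sum_mono)
  also have "\<dots> = (\<Sum>e\<in>nbrs h w d \<inter> X. y0 e)"
    by (simp add: sum.inter_restrict)
  finally have "d \<in> burn_step h w x0 y0 X"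
    using Suc.prems(1,2) by (simp add: burn_step_def)
  with pre show ?case by blast
qed

lemma ever_zero_prefixpoint:
  "burn_step h w x0 y0 {d. in_region h w d \<and> 0 < y0 d \<and> (\<exists>t. x_at t d = 0)}
     \<subseteq> {d. in_region h w d \<and> 0 < y0 d \<and> (\<exists>t. x_at t d = 0)}"
  (is "burn_step h w x0 y0 ?Z \<subseteq> ?Z")
proof
  fix d assume d: "d \<in> burn_step h w x0 y0 ?Z"
  have "\<forall>\<^sub>F t in sequentially. \<forall>e\<in>nbrs h w d \<inter> ?Z. burn_count t e = y0 e"
    using burn_count_eventually_full by (intro eventually_ball_finite) auto
  then obtain t where t: "\<forall>e\<in>nbrs h w d \<inter> ?Z. burn_count t e = y0 e"
    unfolding eventually_sequentially by blast
  have "x0 d \<le> (\<Sum>e\<in>nbrs h w d \<inter> ?Z. y0 e)"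
    using d by (simp add: burn_step_def)
  also have "\<dots> = (\<Sum>e\<in>nbrs h w d \<inter> ?Z. burn_count t e)"
    using t by simp
  also have "\<dots> \<le> (\<Sum>e\<in>nbrs h w d. burn_count t e)"
    by (intro sum_mono2) auto
  finally have "x_at t d = 0"
    using d x_at_eq_diff_burn_counts[of d t] by (simp add: burn_step_def)
  with d show "d \<in> ?Z" by (auto simp: burn_step_def)
qed

theorem ever_zero_iff_burnt:
  assumes "in_region h w d" "0 < y0 d"
  shows "(\<exists>t. x_at t d = 0) \<longleftrightarrow> d \<in> burnt h w x0 y0"
proof
  assume "\<exists>t. x_at t d = 0"
  then show "d \<in> burnt h w x0 y0"
    using zero_in_prefixpoint[OF burnt_unfold[THEN equalityD1]] assms by blast
next
  assume "d \<in> burnt h w x0 y0"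
  then show "\<exists>t. x_at t d = 0"
    using burnt_lowerbound[OF ever_zero_prefixpoint] by blast
qed

theorem ignited_iff_burnt:
  assumes "in_region h w v"
  shows "(\<exists>t. 0 < x_at t v \<and> x_at (Suc t) v = 0) \<longleftrightarrow> 0 < x0 v \<and> v \<in> burnt h w x0 y0"
proof
  assume "\<exists>t. 0 < x_at t v \<and> x_at (Suc t) v = 0"
  then obtain t where t: "0 < x_at t v" "x_at (Suc t) v = 0" by blast
  have "0 < y0 v"
  proof (rule ccontr)
    assume "\<not> 0 < y0 v"
    then have "x_at (Suc t) v = x_at t v" using x_at_no_fuel by simp
    with t show False by simp
  qed
  moreover have "0 < x0 v"
    using x_at_antimono[of 0 t v] t by simp
  ultimately show "0 < x0 v \<and> v \<in> burnt h w x0 y0"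
    using t ever_zero_iff_burnt[OF assms] by blast
next
  assume v: "0 < x0 v \<and> v \<in> burnt h w x0 y0"
  then have "0 < y0 v" using burntD(2) by blast
  with v obtain t where "x_at t v = 0"
    using ever_zero_iff_burnt[OF assms] by blast
  then show "\<exists>t. 0 < x_at t v \<and> x_at (Suc t) v = 0"
  proof (induction t)
    case (Suc t)
    then show ?case by (cases "x_at t v = 0") auto
  qed (use v in simp)
qed

end

section \<open>Reduction to raising every cell\<close>

text \<open>The initial resistances when the path covers the whole region.\<close>

definition raised_x :: "nat \<Rightarrow> (cell \<Rightarrow> nat) \<Rightarrow> nat \<Rightarrow> cell \<Rightarrow> nat" where
  "raised_x w x0 k c = (if snd c = w - 1 then 0 else x0 c + k)"

definition safe_raise :: "nat \<Rightarrow> nat \<Rightarrow> (cell \<Rightarrow> nat) \<Rightarrow> (cell \<Rightarrow> nat) \<Rightarrow> nat \<Rightarrow> bool" where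
  "safe_raise h w x0 y0 k \<longleftrightarrow>
     (\<forall>v. in_region h w v \<and> snd v = 0 \<and> 0 < x0 v \<longrightarrow> v \<notin> burnt h w (raised_x w x0 k) y0)"

lemma protecting_path_iff:
  "protecting_path h w x0 y0 p k \<longleftrightarrow> separating_path h w p \<and>
     (\<forall>v. in_region h w v \<and> snd v = 0 \<longrightarrow>
        \<not> (0 < start_x w x0 p k v \<and> v \<in> burnt h w (start_x w x0 p k) y0))"
proof -
  interpret fire_run h w "start_x w x0 p k" y0 .
  show ?thesis
    unfolding protecting_path_def x_at_def[symmetric] using ignited_iff_burnt by blast
qed

lemma safe_raise_mono:
  assumes "k \<le> k'" "safe_raise h w x0 y0 k"
  shows "safe_raise h w x0 y0 k'"
proof -
  have "burnt h w (raised_x w x0 k') y0 \<subseteq> burnt h w (raised_x w x0 k) y0"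
    using assms(1) by (intro burnt_antimono) (simp add: raised_x_def)
  with assms(2) show ?thesis
    unfolding safe_raise_def by blast
qed

lemma safe_raise_Y_bound:
  assumes "2 \<le> w"
  shows "safe_raise h w x0 y0 (Y_bound h w y0)"
  unfolding safe_raise_def
proof (intro allI impI notI)
  fix v assume v: "in_region h w v \<and> snd v = 0 \<and> 0 < x0 v"
    and burnt: "v \<in> burnt h w (raised_x w x0 (Y_bound h w y0)) y0"
  have "x0 v + Y_bound h w y0 = raised_x w x0 (Y_bound h w y0) v"
    using v assms by (simp add: raised_x_def)
  also have "\<dots> \<le> (\<Sum>e\<in>nbrs h w v \<inter> burnt h w (raised_x w x0 (Y_bound h w y0)) y0. y0 e)"
    using burntD(3)[OF burnt] .
  also have "\<dots> \<le> (\<Sum>e\<in>nbrs h w v. y0 e)"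
    by (intro sum_mono2) auto
  also have "\<dots> \<le> Y_bound h w y0"
    using nbrs_fuel_le_Y_bound v by blast
  finally show False using v by simp
qed

lemma successively_upt: "(\<And>x. P x (Suc x)) \<Longrightarrow> successively P [a..<b]"
  by (simp add: successively_conv_nth)

text \<open>Separating paths may revisit cells, so a single path can raise every cell.\<close>

definition row_sweep :: "nat \<Rightarrow> nat \<Rightarrow> cell list" where
  "row_sweep w i = map (Pair i) [1..<w] @ rev (map (Pair i) [1..<w - 1])"

definition row_tour :: "nat \<Rightarrow> cell set \<Rightarrow> nat \<Rightarrow> cell list" where
  "row_tour w E i = (if (i, 0) \<in> E then [] else [(i, 1), (i, 0)]) @ row_sweep w i"

lemma row_sweep_props:
  assumes "2 \<le> w"
  shows "successively hex_adj (row_sweep w i)" "row_sweep w i \<noteq> []"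
    "hd (row_sweep w i) = (i, 1)" "last (row_sweep w i) = (i, 1)"
proof -
  let ?M = "map (Pair i) [1..<w]" and ?R = "rev (map (Pair i) [1..<w - 1])"
  have M: "?M \<noteq> []" "hd ?M = (i, 1)" "last ?M = (i, w - 1)"
    using assms by (auto simp: hd_map last_map)
  have R: "?R \<noteq> [] \<Longrightarrow> hd ?R = (i, w - 2)" "?R = [] \<or> last ?R = (i, 1)"
    by (cases "w - 1 \<le> 1"; auto simp: hd_rev last_rev hd_map last_map)+
  have "successively hex_adj ?M" "successively hex_adj ?R"
    unfolding successively_rev successively_map by (rule successively_upt, simp add: hex_adj_def)+
  moreover have "?R \<noteq> [] \<Longrightarrow> hex_adj (last ?M) (hd ?R)"
    using M R assms by (auto simp: hex_adj_def)
  ultimately show "successively hex_adj (row_sweep w i)"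
    by (auto simp: row_sweep_def successively_append_iff)
  show "row_sweep w i \<noteq> []" "hd (row_sweep w i) = (i, 1)" "last (row_sweep w i) = (i, 1)"
    using M R assms unfolding row_sweep_def by (cases "w = 2"; auto)+
qed

lemma set_row_sweep: "set (row_sweep w i) = {c. fst c = i \<and> 0 < snd c \<and> snd c < w}"
  by (auto simp: row_sweep_def image_iff)

lemma row_tour_props:
  assumes "2 \<le> w"
  shows "successively hex_adj (row_tour w E i)" "row_tour w E i \<noteq> []"
    "hd (row_tour w E i) = (i, 1)" "last (row_tour w E i) = (i, 1)"
  using row_sweep_props[OF assms, of i] by (auto simp: row_tour_def successively_append_iff hex_adj_def)

lemma set_row_tour:
  assumes "2 \<le> w" "E \<subseteq> {c. snd c = 0}"
  shows "set (row_tour w E i) = {c. fst c = i \<and> snd c < w} - E"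
proof (intro set_eqI iffI)
  fix c assume "c \<in> set (row_tour w E i)"
  then show "c \<in> {c. fst c = i \<and> snd c < w} - E"
    using assms by (auto simp: row_tour_def set_row_sweep split: if_splits)
next
  fix c assume "c \<in> {c. fst c = i \<and> snd c < w} - E"
  then show "c \<in> set (row_tour w E i)"
    by (cases c, cases "snd c = 0") (auto simp: row_tour_def set_row_sweep)
qed

definition snake :: "nat \<Rightarrow> cell set \<Rightarrow> nat \<Rightarrow> cell list" where
  "snake w E n = concat (map (row_tour w E) [0..<n])"

lemma snake_props:
  assumes w: "2 \<le> w" and E: "E \<subseteq> {c. snd c = 0}"
  shows "successively hex_adj (snake w E (Suc m)) \<and> snake w E (Suc m) \<noteq> [] \<and>
    hd (snake w E (Suc m)) = (0, 1) \<and> last (snake w E (Suc m)) = (m, 1) \<and>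
    set (snake w E (Suc m)) = {c. fst c < Suc m \<and> snd c < w} - E"
proof (induction m)
  case 0
  show ?case using row_tour_props[OF w, of E 0] set_row_tour[OF w E, of 0] by (auto simp: snake_def)
next
  case (Suc m)
  have e: "snake w E (Suc (Suc m)) = snake w E (Suc m) @ row_tour w E (Suc m)" by (simp add: snake_def)
  have s: "successively hex_adj (snake w E (Suc m) @ row_tour w E (Suc m))"
    using Suc row_tour_props[OF w, of E "Suc m"] by (auto simp: successively_append_iff hex_adj_def)
  have st: "set (snake w E (Suc m) @ row_tour w E (Suc m)) = {c. fst c < Suc (Suc m) \<and> snd c < w} - E"
    using Suc set_row_tour[OF w E, of "Suc m"] by (auto simp: less_Suc_eq)
  show ?case unfolding e using s st Suc row_tour_props[OF w, of E "Suc m"] by auto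
qed

lemma snake_separating:
  assumes w: "2 \<le> w" and E: "E \<subseteq> {c. snd c = 0}" and h: "1 \<le> h"
  shows "separating_path h w (snake w E h)" "set (snake w E h) = {c. in_region h w c} - E"
proof -
  obtain m where m: "h = Suc m" using h by (cases h) auto
  note P = snake_props[OF w E, of m]
  show "separating_path h w (snake w E h)"
    using P unfolding separating_path_def m successively_conv_nth by (auto simp: in_region_def)
  show "set (snake w E h) = {c. in_region h w c} - E"
    using P unfolding m by (auto simp: in_region_def)
qed

text \<open>The snake raises every cell except the village cells of resistance 0 that burn anyway:
  off the path these can never be ignited, and leaving them unraised does not enlarge the burnt
  set.\<close>

lemma snake_protecting:
  assumes w: "2 \<le> w" and h: "1 \<le> h" and safe: "safe_raise h w x0 y0 k"
  defines "E \<equiv> {v. snd v = 0 \<and> x0 v = 0 \<and> v \<in> burnt h w (raised_x w x0 k) y0}"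
  shows "protecting_path h w x0 y0 (snake w E h) k"
proof -
  let ?B = "burnt h w (raised_x w x0 k) y0"
  let ?x = "start_x w x0 (snake w E h) k"
  have "E \<subseteq> {c. snd c = 0}" by (auto simp: E_def)
  note snake = snake_separating[OF w this h]
  have x_eq: "?x d = raised_x w x0 k d" if "in_region h w d" "d \<notin> E" for d
    using that snake(2) by (simp add: start_x_def raised_x_def)
  have burnt_sub: "burnt h w ?x y0 \<subseteq> ?B"
  proof (rule burnt_lowerbound, rule subsetI)
    fix d assume d: "d \<in> burn_step h w ?x y0 ?B"
    show "d \<in> ?B"
    proof (cases "d \<in> E")
      case False
      with d x_eq[of d] show ?thesis
        by (subst burnt_iff) (simp add: burn_step_def)
    qed (simp add: E_def)
  qed
  show ?thesis
    unfolding protecting_path_iff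
  proof (intro conjI allI impI notI)
    fix v assume v: "in_region h w v \<and> snd v = 0" and ign: "0 < ?x v \<and> v \<in> burnt h w ?x y0"
    then have "v \<in> ?B" using burnt_sub by blast
    moreover have "v \<notin> E"
    proof
      assume "v \<in> E"
      then have "x0 v = 0" "v \<notin> set (snake w E h)" "snd v \<noteq> w - 1"
        using snake(2) w by (auto simp: E_def)
      then have "?x v = 0" by (simp add: start_x_def)
      with ign show False by simp
    qed
    ultimately have "0 < x0 v" using v by (simp add: E_def)
    with safe v \<open>v \<in> ?B\<close> show False
      unfolding safe_raise_def by blast
  qed (rule snake(1))
qed

theorem exists_protecting_path_iff:
  assumes w: "2 \<le> w" and h: "1 \<le> h"
  shows "(\<exists>p. protecting_path h w x0 y0 p k) \<longleftrightarrow> safe_raise h w x0 y0 k"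
proof
  assume "\<exists>p. protecting_path h w x0 y0 p k"
  then obtain p where p: "protecting_path h w x0 y0 p k" by blast
  have "burnt h w (raised_x w x0 k) y0 \<subseteq> burnt h w (start_x w x0 p k) y0"
    by (intro burnt_antimono) (simp add: raised_x_def start_x_def)
  with p w show "safe_raise h w x0 y0 k"
    unfolding safe_raise_def protecting_path_iff by (fastforce simp: start_x_def)
qed (use snake_protecting[OF w h] in blast)

lemma min_protect_k_eq_Least_safe_raise:
  assumes "2 \<le> w" "1 \<le> h"
  shows "min_protect_k h w x0 y0 = (LEAST k. safe_raise h w x0 y0 k)"
  unfolding min_protect_k_def using exists_protecting_path_iff[OF assms] by simp

lemma min_protect_k_single_column:
  assumes "1 \<le> h"
  shows "min_protect_k h 1 x0 y0 = 0"
proof -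
  let ?p = "map (\<lambda>i. (i, 0)) [0..<h]"
  have "successively hex_adj ?p"
    unfolding successively_map by (rule successively_upt) (simp add: hex_adj_def)
  then have "separating_path h 1 ?p"
    using assms unfolding separating_path_def successively_conv_nth
    by (auto simp: in_region_def hd_map last_map)
  then have "protecting_path h 1 x0 y0 ?p 0"
    by (simp add: protecting_path_iff start_x_def)
  then show ?thesis
    unfolding min_protect_k_def by (intro Least_eq_0) blast
qed

section \<open>Reasoning about terminating runs\<close>

definition runs :: "com \<Rightarrow> state \<Rightarrow> (nat \<Rightarrow> state \<Rightarrow> bool) \<Rightarrow> bool" where
  "runs c s Q \<longleftrightarrow> (\<exists>t s'. big_step c s t s' \<and> Q t s')"

inductive_cases Skip_bigE: "big_step Skip s t s'"
inductive_cases Assign_bigE: "big_step (Assign r a) s t s'"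
inductive_cases Store_bigE: "big_step (Store a e) s t s'"
inductive_cases Seq_bigE: "big_step (Seq c1 c2) s t s'"
inductive_cases If_bigE: "big_step (If b c1 c2) s t s'"

lemma runs_Skip [simp]: "runs Skip s Q \<longleftrightarrow> Q 1 s"
  unfolding runs_def by (metis Skip_bigE big_step.intros(1))

lemma runs_Assign [simp]: "runs (Assign r a) s Q \<longleftrightarrow> Q 1 ((fst s)(r := aval a s), snd s)"
  unfolding runs_def by (metis Assign_bigE big_step.intros(2))

lemma runs_Store [simp]: "runs (Store a e) s Q \<longleftrightarrow> Q 1 (fst s, (snd s)(aval a s := aval e s))"
  unfolding runs_def by (metis Store_bigE big_step.intros(3))

lemma runs_Seq [simp]:
  "runs (Seq c1 c2) s Q \<longleftrightarrow> runs c1 s (\<lambda>t1 s1. runs c2 s1 (\<lambda>t2 s2. Q (t1 + t2) s2))"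
  unfolding runs_def by (blast elim: Seq_bigE intro: big_step.intros)

lemma runs_If [simp]:
  "runs (If b c1 c2) s Q \<longleftrightarrow>
     (if bval b s then runs c1 s (\<lambda>t. Q (Suc t)) else runs c2 s (\<lambda>t. Q (Suc t)))"
  unfolding runs_def by (cases "bval b s") (metis If_bigE big_step.intros(5,6))+

lemma runs_mono: "runs c s Q \<Longrightarrow> (\<And>t s'. Q t s' \<Longrightarrow> Q' t s') \<Longrightarrow> runs c s Q'"
  unfolding runs_def by blast

lemma runs_While:
  assumes "I s"
    and body: "\<And>s. I s \<Longrightarrow> bval b s \<Longrightarrow> runs c s (\<lambda>t s'. I s' \<and> t + 1 + P s' \<le> P s)"
  shows "runs (While b c) s (\<lambda>t s'. I s' \<and> \<not> bval b s' \<and> t \<le> P s + 1)"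
  using assms(1)
proof (induction "P s" arbitrary: s rule: less_induct)
  case less
  show ?case
  proof (cases "bval b s")
    case False
    then have "big_step (While b c) s 1 s" by (rule big_step.intros)
    with less.prems False show ?thesis unfolding runs_def by (intro exI[of _ 1] exI[of _ s]) simp
  next
    case True
    obtain t1 s1 where 1: "big_step c s t1 s1" "I s1" "t1 + 1 + P s1 \<le> P s"
      using body[OF less.prems True] unfolding runs_def by blast
    then obtain t2 s2 where 2: "big_step (While b c) s1 t2 s2" "I s2" "\<not> bval b s2" "t2 \<le> P s1 + 1"
      using less.hyps[of s1] unfolding runs_def by auto
    have "big_step (While b c) s (Suc (t1 + t2)) s2"
      using True 1(1) 2(1) by (rule big_step.intros)
    moreover have "Suc (t1 + t2) \<le> P s + 1"
      using 1(3) 2(4) by simp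
    ultimately show ?thesis
      using 2 unfolding runs_def by blast
  qed
qed

lemma runs_for_loop:
  assumes "I 0 s"
    and counter: "\<And>m s. I m s \<Longrightarrow> fst s i = int m \<and> fst s b = int N \<and> m \<le> N"
    and body: "\<And>m s. I m s \<Longrightarrow> m < N \<Longrightarrow> runs c s (\<lambda>t s'. I (Suc m) s' \<and> t \<le> K)"
  shows "runs (While (Less (Reg i) (Reg b)) c) s (\<lambda>t s'. I N s' \<and> t \<le> (K + 1) * N + 1)"
proof -
  let ?P = "\<lambda>s. (K + 1) * (N - nat (fst s i))"
  have "runs (While (Less (Reg i) (Reg b)) c) s
      (\<lambda>t s'. (\<exists>m. I m s') \<and> \<not> bval (Less (Reg i) (Reg b)) s' \<and> t \<le> ?P s + 1)"
  proof (rule runs_While)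
    fix s assume "\<exists>m. I m s" "bval (Less (Reg i) (Reg b)) s"
    then obtain m where m: "I m s" "m < N" using counter by fastforce
    show "runs c s (\<lambda>t s'. (\<exists>m. I m s') \<and> t + 1 + ?P s' \<le> ?P s)"
    proof (rule runs_mono[OF body[OF m]])
      fix t s' assume s': "I (Suc m) s' \<and> t \<le> K"
      obtain d where N: "N = Suc m + d" using m(2) less_iff_Suc_add by blast
      have "nat (fst s i) = m" "nat (fst s' i) = Suc m"
        using counter[OF m(1)] counter[of "Suc m" s'] s' by (metis nat_int)+
      then have "?P s = (K + 1) * d + (K + 1)" "?P s' = (K + 1) * d"
        using N by simp_all
      with s' show "(\<exists>m. I m s') \<and> t + 1 + ?P s' \<le> ?P s"
        by auto
    qed
  qed (use assms(1) in blast)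
  then show ?thesis
  proof (rule runs_mono, elim conjE exE)
    fix t s' m assume I: "I m s'" and stop: "\<not> bval (Less (Reg i) (Reg b)) s'" and t: "t \<le> ?P s + 1"
    have "m = N" using counter[OF I] stop by simp
    moreover have "?P s \<le> (K + 1) * N" by (intro mult_le_mono2) simp
    ultimately show "I N s' \<and> t \<le> (K + 1) * N + 1" using I t by simp
  qed
qed

section \<open>A worklist computation of the burnt set\<close>

text \<open>The neighbours of a cell in the order in which the program visits them.\<close>

fun nbr_list :: "nat \<Rightarrow> nat \<Rightarrow> cell \<Rightarrow> cell list" where
  "nbr_list h w (i, j) =
     (if j + 1 < w then [(i, j + 1)] else []) @ (if 0 < j then [(i, j - 1)] else []) @
     (if i + 1 < h then [(i + 1, j)] else []) @ (if 0 < i then [(i - 1, j)] else []) @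
     (if odd i
      then (if j + 1 < w \<and> i + 1 < h then [(i + 1, j + 1)] else []) @
           (if j + 1 < w \<and> 0 < i then [(i - 1, j + 1)] else [])
      else (if 0 < j \<and> i + 1 < h then [(i + 1, j - 1)] else []) @
           (if 0 < j \<and> 0 < i then [(i - 1, j - 1)] else []))"

lemma set_nbr_list_subset:
  assumes "in_region h w (i, j)" "d \<in> set (nbr_list h w (i, j))"
  shows "d \<in> nbrs h w (i, j)"
  using assms by (auto simp: nbrs_def in_region_def hex_adj_def split: if_splits)

lemma nbrs_subset_set_nbr_list:
  assumes "(a, b) \<in> nbrs h w (i, j)"
  shows "(a, b) \<in> set (nbr_list h w (i, j))"
proof -
  have r: "a < h" "b < w" using assms by (auto simp: nbrs_def in_region_def)
  from assms consider "a = i" "b = j + 1" | "a = i" "j = b + 1"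
    | "a = i + 1" "b = j" | "i = a + 1" "b = j"
    | "a = i + 1" "odd i" "b = j + 1" | "i = a + 1" "odd i" "b = j + 1"
    | "a = i + 1" "even i" "j = b + 1" | "i = a + 1" "even i" "j = b + 1"
    unfolding nbrs_def hex_adj_def by (auto split: if_splits)
  then show ?thesis
    using r by cases simp_all
qed

lemma set_nbr_list: "in_region h w c \<Longrightarrow> set (nbr_list h w c) = nbrs h w c"
  using set_nbr_list_subset nbrs_subset_set_nbr_list by (cases c) fastforce

lemma distinct_nbr_list: "distinct (nbr_list h w c)"
  by (cases c) auto

type_synonym wl_state = "(cell \<Rightarrow> nat) \<times> cell set \<times> cell list"

text \<open>A state consists of accumulators, the set of marked cells (known to burn) and a stack of
  marked cells whose fuel has not yet been added to the accumulators of their neighbours.\<close>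

locale worklist =
  fixes h w :: nat and x0 y0 :: "cell \<Rightarrow> nat" and k :: nat
begin

abbreviation "R \<equiv> {c. in_region h w c}"
abbreviation "th \<equiv> raised_x w x0 k"
abbreviation "B \<equiv> burnt h w th y0"

text \<open>The test uses x0 d + k rather than th d, as the program does; the two differ only on the
  right boundary, whose cells with fuel are marked from the start.\<close>

definition relax :: "cell \<Rightarrow> cell \<Rightarrow> wl_state \<Rightarrow> wl_state" where
  "relax c d = (\<lambda>(acc, mark, stk).
     let acc' = acc(d := acc d + y0 c) in
     if d \<notin> mark \<and> 0 < y0 d \<and> x0 d + k \<le> acc' d then (acc', insert d mark, stk @ [d])
     else (acc', mark, stk))"

definition wl_step :: "wl_state \<Rightarrow> wl_state" where
  "wl_step = (\<lambda>(acc, mark, stk).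
     fold (relax (last stk)) (nbr_list h w (last stk)) (acc, mark, butlast stk))"

definition marks_ok :: "cell set \<Rightarrow> cell list \<Rightarrow> bool" where
  "marks_ok mark stk \<longleftrightarrow> mark \<subseteq> B \<and> mark \<subseteq> R \<and> set stk \<subseteq> mark \<and> distinct stk \<and>
     {d \<in> R. snd d = w - 1 \<and> 0 < y0 d} \<subseteq> mark"

definition wl_inv :: "wl_state \<Rightarrow> bool" where
  "wl_inv = (\<lambda>(acc, mark, stk). marks_ok mark stk \<and>
     (\<forall>d. in_region h w d \<longrightarrow> acc d = (\<Sum>e\<in>nbrs h w d \<inter> (mark - set stk). y0 e)) \<and>
     (\<forall>d. in_region h w d \<and> d \<notin> mark \<longrightarrow> \<not> (0 < y0 d \<and> th d \<le> acc d)))"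

text \<open>The invariant while the popped cell c is relaxed, D being the neighbours already done.\<close>

definition relax_inv :: "cell \<Rightarrow> cell set \<Rightarrow> wl_state \<Rightarrow> bool" where
  "relax_inv c D = (\<lambda>(acc, mark, stk). marks_ok mark stk \<and> c \<in> mark \<and> c \<notin> set stk \<and>
     (\<forall>d. in_region h w d \<longrightarrow>
        acc d = (\<Sum>e\<in>nbrs h w d \<inter> (mark - set stk - {c}). y0 e) + (if d \<in> D then y0 c else 0)) \<and>
     (\<forall>d. in_region h w d \<and> d \<notin> mark \<and> d \<notin> nbrs h w c - D \<longrightarrow> \<not> (0 < y0 d \<and> th d \<le> acc d)))"

lemma wl_invI:
  assumes "marks_ok mark stk"
    and "\<And>d. in_region h w d \<Longrightarrow> acc d = (\<Sum>e\<in>nbrs h w d \<inter> (mark - set stk). y0 e)"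
    and "\<And>d. in_region h w d \<Longrightarrow> d \<notin> mark \<Longrightarrow> \<not> (0 < y0 d \<and> th d \<le> acc d)"
  shows "wl_inv (acc, mark, stk)"
  using assms by (simp add: wl_inv_def del: split_paired_All)

lemma wl_invD:
  assumes "wl_inv (acc, mark, stk)"
  shows "marks_ok mark stk"
    and "\<And>d. in_region h w d \<Longrightarrow> acc d = (\<Sum>e\<in>nbrs h w d \<inter> (mark - set stk). y0 e)"
    and "\<And>d. in_region h w d \<Longrightarrow> d \<notin> mark \<Longrightarrow> \<not> (0 < y0 d \<and> th d \<le> acc d)"
  using assms unfolding wl_inv_def prod.case by blast+

lemma relax_invI:
  assumes "marks_ok mark stk" "c \<in> mark" "c \<notin> set stk"
    and "\<And>d. in_region h w d \<Longrightarrow>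
      acc d = (\<Sum>e\<in>nbrs h w d \<inter> (mark - set stk - {c}). y0 e) + (if d \<in> D then y0 c else 0)"
    and "\<And>d. in_region h w d \<Longrightarrow> d \<notin> mark \<Longrightarrow> d \<notin> nbrs h w c - D \<Longrightarrow> \<not> (0 < y0 d \<and> th d \<le> acc d)"
  shows "relax_inv c D (acc, mark, stk)"
  using assms by (simp add: relax_inv_def del: split_paired_All)

lemma relax_invD:
  assumes "relax_inv c D (acc, mark, stk)"
  shows "marks_ok mark stk" "c \<in> mark" "c \<notin> set stk"
    and "\<And>d. in_region h w d \<Longrightarrow>
      acc d = (\<Sum>e\<in>nbrs h w d \<inter> (mark - set stk - {c}). y0 e) + (if d \<in> D then y0 c else 0)"
    and "\<And>d. in_region h w d \<Longrightarrow> d \<notin> mark \<Longrightarrow> d \<notin> nbrs h w c - D \<Longrightarrow> \<not> (0 < y0 d \<and> th d \<le> acc d)"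
  using assms unfolding relax_inv_def prod.case by blast+

lemma sum_nbrs_insert:
  assumes "c \<in> nbrs h w d" "c \<notin> S"
  shows "(\<Sum>e\<in>nbrs h w d \<inter> insert c S. y0 e) = (\<Sum>e\<in>nbrs h w d \<inter> S. y0 e) + y0 c"
proof -
  have "nbrs h w d \<inter> insert c S = insert c (nbrs h w d \<inter> S)" using assms by auto
  with assms show ?thesis by simp
qed

lemma relax_pushes_burnt:
  assumes inv: "relax_inv c D (acc, mark, stk)" and d: "d \<in> nbrs h w c" "d \<notin> D"
    and c: "in_region h w c" and push: "0 < y0 d" "x0 d + k \<le> acc d + y0 c"
  shows "d \<in> B"
proof -
  note ok = relax_invD(1-3)[OF inv]
  have "th d \<le> acc d + y0 c"
    using push by (simp add: raised_x_def)
  also have "\<dots> = (\<Sum>e\<in>nbrs h w d \<inter> (mark - set stk - {c}). y0 e) + y0 c"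
    using relax_invD(4)[OF inv nbrs_in_region[OF d(1)]] d(2) by simp
  also have "\<dots> = (\<Sum>e\<in>nbrs h w d \<inter> insert c (mark - set stk - {c}). y0 e)"
    by (intro sum_nbrs_insert[symmetric] nbrs_sym[OF c d(1)]) simp
  also have "\<dots> \<le> (\<Sum>e\<in>nbrs h w d \<inter> B. y0 e)"
    using ok by (intro sum_mono2) (auto simp: marks_ok_def)
  finally show "d \<in> B"
    using nbrs_in_region[OF d(1)] push by (subst burnt_iff) simp
qed

lemma relax_preserves_inv:
  assumes inv: "relax_inv c D (acc, mark, stk)" and d: "d \<in> nbrs h w c" "d \<notin> D"
    and c: "in_region h w c"
  shows "relax_inv c (insert d D) (relax c d (acc, mark, stk))"
proof -
  let ?acc = "acc(d := acc d + y0 c)"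
  note ok = relax_invD(1-3)[OF inv]
  have dR: "in_region h w d" and dc: "d \<noteq> c"
    using d hex_adj_irrefl[of c] by (auto simp: nbrs_def)
  have acc': "?acc e =
      (\<Sum>e'\<in>nbrs h w e \<inter> (mark - set stk - {c}). y0 e') + (if e \<in> insert d D then y0 c else 0)"
    if "in_region h w e" for e
    using relax_invD(4)[OF inv that] d(2) by auto
  have unmarked': "\<not> (0 < y0 e \<and> th e \<le> ?acc e)"
    if "in_region h w e" "e \<notin> mark" "e \<notin> nbrs h w c - insert d D" "e \<noteq> d" for e
    using relax_invD(5)[OF inv that(1,2)] that(3,4) by simp
  show ?thesis
  proof (cases "d \<notin> mark \<and> 0 < y0 d \<and> x0 d + k \<le> ?acc d")
    case True
    then have eq: "relax c d (acc, mark, stk) = (?acc, insert d mark, stk @ [d])"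
      by (simp add: relax_def Let_def)
    have "d \<in> B" using relax_pushes_burnt[OF inv d c] True by simp
    with ok True dR have "marks_ok (insert d mark) (stk @ [d])"
      by (auto simp: marks_ok_def)
    moreover have "insert d mark - set (stk @ [d]) - {c} = mark - set stk - {c}"
      using True by auto
    ultimately show ?thesis
      unfolding eq using ok dc acc' unmarked' by (intro relax_invI) auto
  next
    case False
    then have eq: "relax c d (acc, mark, stk) = (?acc, mark, stk)"
      by (auto simp: relax_def Let_def)
    have d_unmarked: "\<not> (0 < y0 d \<and> th d \<le> ?acc d)" if "d \<notin> mark"
    proof
      assume a: "0 < y0 d \<and> th d \<le> ?acc d"
      have "d \<notin> {d \<in> R. snd d = w - 1 \<and> 0 < y0 d}"
        using ok(1) that by (auto simp: marks_ok_def)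
      with dR a have "snd d \<noteq> w - 1" by simp
      with a False that show False by (simp add: raised_x_def)
    qed
    show ?thesis
      unfolding eq
    proof (rule relax_invI)
      fix e assume e: "in_region h w e" "e \<notin> mark" "e \<notin> nbrs h w c - insert d D"
      show "\<not> (0 < y0 e \<and> th e \<le> ?acc e)"
        using d_unmarked unmarked'[OF e] e(2) by (cases "e = d") auto
    qed (use ok acc' in auto)
  qed
qed

lemma fold_relax_preserves_inv:
  assumes "relax_inv c D st" "set ds \<subseteq> nbrs h w c" "distinct ds" "set ds \<inter> D = {}"
    "in_region h w c"
  shows "relax_inv c (D \<union> set ds) (fold (relax c) ds st)"
  using assms
proof (induction ds arbitrary: D st)
  case (Cons d ds)
  obtain acc mark stk where st: "st = (acc, mark, stk)" by (cases st)
  have "relax_inv c (insert d D) (relax c d st)"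
    using Cons.prems unfolding st by (intro relax_preserves_inv) auto
  then have "relax_inv c (insert d D \<union> set ds) (fold (relax c) ds (relax c d st))"
    using Cons.prems by (intro Cons.IH) auto
  then show ?case by simp
qed simp

lemma wl_inv_pop:
  assumes inv: "wl_inv (acc, mark, stk)" and ne: "stk \<noteq> []"
  shows "relax_inv (last stk) {} (acc, mark, butlast stk)"
proof -
  let ?c = "last stk" and ?b = "butlast stk"
  have split: "stk = ?b @ [?c]" using ne by simp
  note ok = wl_invD(1)[OF inv]
  then have "distinct (?b @ [?c])" "set (?b @ [?c]) \<subseteq> mark"
    using split by (metis marks_ok_def)+
  then have b: "distinct ?b" "?c \<notin> set ?b" "?c \<in> mark" "set ?b \<subseteq> mark" by auto
  have "mark - set ?b - {?c} = mark - set stk"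
    by (subst (2) split) auto
  with b ok show ?thesis
    using wl_invD(2,3)[OF inv] by (intro relax_invI) (auto simp: marks_ok_def)
qed

lemma relax_inv_done:
  assumes inv: "relax_inv c (nbrs h w c) (acc, mark, stk)" and c: "in_region h w c"
  shows "wl_inv (acc, mark, stk)"
proof (rule wl_invI)
  note cm = relax_invD(2,3)[OF inv]
  show "acc d = (\<Sum>e\<in>nbrs h w d \<inter> (mark - set stk). y0 e)" if d: "in_region h w d" for d
  proof (cases "d \<in> nbrs h w c")
    case True
    have "(\<Sum>e\<in>nbrs h w d \<inter> (mark - set stk). y0 e)
        = (\<Sum>e\<in>nbrs h w d \<inter> (mark - set stk - {c}). y0 e) + y0 c"
      using sum_nbrs_insert[OF nbrs_sym[OF c True], of "mark - set stk - {c}"] cm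
      by (simp add: insert_absorb)
    with relax_invD(4)[OF inv d] True show ?thesis by simp
  next
    case False
    then have "c \<notin> nbrs h w d"
      using nbrs_sym[OF d] by blast
    then have "nbrs h w d \<inter> (mark - set stk - {c}) = nbrs h w d \<inter> (mark - set stk)"
      by auto
    with relax_invD(4)[OF inv d] False show ?thesis by simp
  qed
qed (use relax_invD[OF inv] in auto)

lemma wl_step_preserves_inv:
  assumes inv: "wl_inv (acc, mark, stk)" and ne: "stk \<noteq> []"
  shows "wl_inv (wl_step (acc, mark, stk))"
proof -
  let ?c = "last stk"
  have c: "in_region h w ?c"
    using wl_invD(1)[OF inv] last_in_set[OF ne] by (auto simp: marks_ok_def)
  have "relax_inv ?c ({} \<union> set (nbr_list h w ?c))
      (fold (relax ?c) (nbr_list h w ?c) (acc, mark, butlast stk))"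
    using wl_inv_pop[OF inv ne] c
    by (intro fold_relax_preserves_inv) (auto simp: set_nbr_list distinct_nbr_list)
  then have "relax_inv ?c (nbrs h w ?c) (wl_step (acc, mark, stk))"
    using c by (simp add: wl_step_def set_nbr_list)
  then show ?thesis
    using relax_inv_done c by (metis prod_cases3)
qed

definition potential :: "wl_state \<Rightarrow> nat" where
  "potential = (\<lambda>(acc, mark, stk). length stk + card (R - mark))"

lemma potential_relax:
  assumes "in_region h w d"
  shows "potential (relax c d (acc, mark, stk)) = potential (acc, mark, stk)"
proof -
  have "card (R - mark) = Suc (card (R - insert d mark))" if "d \<notin> mark"
  proof -
    have "R - insert d mark = (R - mark) - {d}" by auto
    moreover have "d \<in> R - mark" using assms that by simp
    ultimately show ?thesis
      using card.remove[of "R - mark" d] finite_region by simp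
  qed
  then show ?thesis
    by (auto simp: relax_def potential_def Let_def)
qed

lemma potential_fold_relax:
  "set ds \<subseteq> R \<Longrightarrow> potential (fold (relax c) ds st) = potential st"
proof (induction ds arbitrary: st)
  case (Cons d ds)
  obtain acc mark stk where st: "st = (acc, mark, stk)" by (cases st)
  from Cons show ?case
    using potential_relax[of d c acc mark stk] by (simp add: st)
qed simp

lemma potential_wl_step:
  assumes "wl_inv (acc, mark, stk)" "stk \<noteq> []"
  shows "potential (wl_step (acc, mark, stk)) + 1 = potential (acc, mark, stk)"
proof -
  have "in_region h w (last stk)"
    using wl_invD(1)[OF assms(1)] last_in_set[OF assms(2)] by (auto simp: marks_ok_def)
  then have "set (nbr_list h w (last stk)) \<subseteq> R"
    by (auto simp: set_nbr_list nbrs_def)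
  then have "potential (wl_step (acc, mark, stk)) = potential (acc, mark, butlast stk)"
    by (simp add: wl_step_def potential_fold_relax)
  with assms(2) show ?thesis
    by (simp add: potential_def)
qed

lemma potential_le:
  assumes "wl_inv (acc, mark, stk)"
  shows "potential (acc, mark, stk) \<le> h * w"
proof -
  have ok: "mark \<subseteq> R" "set stk \<subseteq> mark" "distinct stk"
    using wl_invD(1)[OF assms] by (auto simp: marks_ok_def)
  have fin: "finite mark" using ok(1) finite_region by (rule finite_subset)
  have "length stk = card (set stk)" using ok(3) by (simp add: distinct_card)
  also have "\<dots> \<le> card mark" using ok(2) fin by (rule card_mono[rotated])
  finally have "length stk + card (R - mark) \<le> card mark + card (R - mark)" by simp
  also have "\<dots> = card R"
    using ok(1) fin finite_region by (simp add: card_Diff_subset card_mono)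
  finally show ?thesis by (simp add: potential_def card_region)
qed

lemma wl_inv_empty_stack:
  assumes "wl_inv (acc, mark, [])"
  shows "mark = B"
proof
  show "mark \<subseteq> B"
    using wl_invD(1)[OF assms] by (simp add: marks_ok_def)
  have "burn_step h w th y0 mark \<subseteq> mark"
  proof
    fix d assume d: "d \<in> burn_step h w th y0 mark"
    show "d \<in> mark"
    proof (rule ccontr)
      assume "d \<notin> mark"
      with d wl_invD(2,3)[OF assms, of d] show False by (simp add: burn_step_def)
    qed
  qed
  then show "B \<subseteq> mark"
    by (rule burnt_lowerbound)
qed

definition seeds :: "cell set" where
  "seeds = {c. in_region h w c \<and> 0 < y0 c \<and> th c = 0}"

lemma wl_inv_init:
  assumes "set stk = seeds" "distinct stk"
  shows "wl_inv ((\<lambda>_. 0), seeds, stk)"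
proof (rule wl_invI)
  have "seeds \<subseteq> B"
  proof
    fix c assume "c \<in> seeds"
    then show "c \<in> B" by (subst burnt_iff) (simp add: seeds_def)
  qed
  with assms show "marks_ok seeds stk"
    by (auto simp: marks_ok_def seeds_def raised_x_def)
qed (auto simp: assms seeds_def)

end

section \<open>A unit-cost RAM program\<close>

text \<open>Besides the input at addresses 0 to 2 + 2n, the memory holds five work arrays indexed by
  cell numbers, interleaved at the negative addresses ad j m: accumulators, marks, the stack, and
  the row and column of each cell number, which are tabulated because the machine can neither
  multiply nor divide.\<close>

abbreviation (input) r_lo :: nat where "r_lo \<equiv> 0"
abbreviation (input) r_h :: nat where "r_h \<equiv> 1"
abbreviation (input) r_w :: nat where "r_w \<equiv> 2"
abbreviation (input) r_n :: nat where "r_n \<equiv> 3"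
abbreviation (input) r_hi :: nat where "r_hi \<equiv> 4"
abbreviation (input) r_k :: nat where "r_k \<equiv> 5"
abbreviation (input) r_i :: nat where "r_i \<equiv> 6"
abbreviation (input) r_row :: nat where "r_row \<equiv> 7"
abbreviation (input) r_col :: nat where "r_col \<equiv> 8"
abbreviation (input) r_top :: nat where "r_top \<equiv> 9"
abbreviation (input) r_cur :: nat where "r_cur \<equiv> 10"
abbreviation (input) r_ok :: nat where "r_ok \<equiv> 11"
abbreviation (input) r_nb :: nat where "r_nb \<equiv> 12"

abbreviation (input) arr_acc :: nat where "arr_acc \<equiv> 0"
abbreviation (input) arr_mark :: nat where "arr_mark \<equiv> 1"
abbreviation (input) arr_stack :: nat where "arr_stack \<equiv> 2"
abbreviation (input) arr_row :: nat where "arr_row \<equiv> 3"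
abbreviation (input) arr_col :: nat where "arr_col \<equiv> 4"

definition ad :: "nat \<Rightarrow> int \<Rightarrow> int" where
  "ad j m = -1 - int j - 5 * m"

definition Ad :: "nat \<Rightarrow> aexp \<Rightarrow> aexp" where
  "Ad j e = Sub (Num (-1 - int j)) (Add e (Add e (Add e (Add e e))))"

definition X_addr :: "aexp \<Rightarrow> aexp" where
  "X_addr e = Add (Num 2) e"

definition Y_addr :: "aexp \<Rightarrow> aexp" where
  "Y_addr e = Add (Add (Num 2) (Reg r_n)) e"

lemma aval_Ad [simp]: "aval (Ad j e) s = ad j (aval e s)"
  by (simp add: Ad_def ad_def)

lemma aval_X_addr [simp]: "aval (X_addr e) s = 2 + aval e s"
  by (simp add: X_addr_def)

lemma aval_Y_addr [simp]: "aval (Y_addr e) s = 2 + fst s r_n + aval e s"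
  by (simp add: Y_addr_def)

lemma ad_eq_iff [simp]: "j < 5 \<Longrightarrow> j' < 5 \<Longrightarrow> ad j m = ad j' m' \<longleftrightarrow> j = j' \<and> m = m'"
  unfolding ad_def by presburger

lemma ad_neg: "0 \<le> m \<Longrightarrow> ad j m < 0"
  by (simp add: ad_def)

definition push_com :: com where
  "push_com = Seq (Store (Ad arr_mark (Reg r_nb)) (Num 1))
     (Seq (Store (Ad arr_stack (Reg r_top)) (Reg r_nb)) (Assign r_top (Add (Reg r_top) (Num 1))))"

definition relax_com :: "aexp \<Rightarrow> com" where
  "relax_com e = Seq (Assign r_nb e)
     (Seq (Store (Ad arr_acc (Reg r_nb)) (Add (Load (Ad arr_acc (Reg r_nb))) (Load (Y_addr (Reg r_cur)))))
     (If (Eq (Load (Ad arr_mark (Reg r_nb))) (Num 0))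
        (If (Less (Num 0) (Load (Y_addr (Reg r_nb))))
           (If (Less (Load (Ad arr_acc (Reg r_nb))) (Add (Load (X_addr (Reg r_nb))) (Reg r_k)))
              Skip push_com) Skip) Skip))"

definition row_cur :: aexp where
  "row_cur = Load (Ad arr_row (Reg r_cur))"

definition col_cur :: aexp where
  "col_cur = Load (Ad arr_col (Reg r_cur))"

definition relax_if :: "bexp \<Rightarrow> aexp \<Rightarrow> com" where
  "relax_if b e = If b (relax_com e) Skip"

definition relax_nbrs_com :: com where
  "relax_nbrs_com =
     Seq (relax_if (Less (Add col_cur (Num 1)) (Reg r_w)) (Add (Reg r_cur) (Num 1)))
    (Seq (relax_if (Less (Num 0) col_cur) (Sub (Reg r_cur) (Num 1)))
    (Seq (relax_if (Less (Add row_cur (Num 1)) (Reg r_h)) (Add (Reg r_cur) (Reg r_w)))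
    (Seq (relax_if (Less (Num 0) row_cur) (Sub (Reg r_cur) (Reg r_w)))
     (If (Eq (Sub row_cur (Add (Half row_cur) (Half row_cur))) (Num 1))
       (Seq (If (Less (Add col_cur (Num 1)) (Reg r_w))
              (relax_if (Less (Add row_cur (Num 1)) (Reg r_h))
                (Add (Add (Reg r_cur) (Reg r_w)) (Num 1))) Skip)
            (If (Less (Add col_cur (Num 1)) (Reg r_w))
              (relax_if (Less (Num 0) row_cur) (Add (Sub (Reg r_cur) (Reg r_w)) (Num 1))) Skip))
       (Seq (If (Less (Num 0) col_cur)
              (relax_if (Less (Add row_cur (Num 1)) (Reg r_h))
                (Sub (Add (Reg r_cur) (Reg r_w)) (Num 1))) Skip)
            (If (Less (Num 0) col_cur)
              (relax_if (Less (Num 0) row_cur) (Sub (Sub (Reg r_cur) (Reg r_w)) (Num 1))) Skip))))))"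

definition wl_step_com :: com where
  "wl_step_com = Seq (Assign r_top (Sub (Reg r_top) (Num 1)))
     (Seq (Assign r_cur (Load (Ad arr_stack (Reg r_top)))) relax_nbrs_com)"

definition worklist_com :: com where
  "worklist_com = While (Less (Num 0) (Reg r_top)) wl_step_com"

definition seed_com :: com where
  "seed_com = Seq (Store (Ad arr_mark (Reg r_i)) (Num 1))
     (Seq (Store (Ad arr_stack (Reg r_top)) (Reg r_i)) (Assign r_top (Add (Reg r_top) (Num 1))))"

definition init_step_com :: com where
  "init_step_com = Seq (Store (Ad arr_acc (Reg r_i)) (Num 0)) (Seq (Store (Ad arr_mark (Reg r_i)) (Num 0))
     (Seq (If (Less (Num 0) (Load (Y_addr (Reg r_i))))
            (If (Eq (Load (Ad arr_col (Reg r_i))) (Sub (Reg r_w) (Num 1))) seed_com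
               (If (Eq (Add (Load (X_addr (Reg r_i))) (Reg r_k)) (Num 0)) seed_com Skip)) Skip)
      (Assign r_i (Add (Reg r_i) (Num 1)))))"

definition init_com :: com where
  "init_com = Seq (Assign r_i (Num 0)) (Seq (Assign r_top (Num 0))
     (While (Less (Reg r_i) (Reg r_n)) init_step_com))"

definition check_step_com :: com where
  "check_step_com = Seq
     (If (Eq (Load (Ad arr_col (Reg r_i))) (Num 0))
        (If (Less (Num 0) (Load (X_addr (Reg r_i))))
           (If (Eq (Load (Ad arr_mark (Reg r_i))) (Num 1)) (Assign r_ok (Num 0)) Skip) Skip) Skip)
     (Assign r_i (Add (Reg r_i) (Num 1)))"

definition check_com :: com where
  "check_com = Seq (Assign r_ok (Num 1)) (Seq (Assign r_i (Num 0))
     (While (Less (Reg r_i) (Reg r_n)) check_step_com))"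

definition test_com :: com where
  "test_com = Seq init_com (Seq worklist_com check_com)"

definition bsearch_step_com :: com where
  "bsearch_step_com = Seq (Assign r_k (Half (Add (Reg r_lo) (Reg r_hi))))
     (Seq test_com
       (If (Eq (Reg r_ok) (Num 1)) (Assign r_hi (Reg r_k)) (Assign r_lo (Add (Reg r_k) (Num 1)))))"

definition bsearch_com :: com where
  "bsearch_com = Seq (Assign r_lo (Num 0)) (While (Less (Reg r_lo) (Reg r_hi)) bsearch_step_com)"

definition table_step_com :: com where
  "table_step_com = Seq (Store (Ad arr_row (Reg r_i)) (Reg r_row))
    (Seq (Store (Ad arr_col (Reg r_i)) (Reg r_col))
    (Seq (Assign r_hi (Add (Reg r_hi) (Load (Y_addr (Reg r_i)))))
    (Seq (Assign r_i (Add (Reg r_i) (Num 1)))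
    (Seq (Assign r_col (Add (Reg r_col) (Num 1)))
      (If (Eq (Reg r_col) (Reg r_w))
        (Seq (Assign r_col (Num 0)) (Assign r_row (Add (Reg r_row) (Num 1)))) Skip)))))"

definition table_com :: com where
  "table_com = Seq (Assign r_i (Num 0)) (Seq (Assign r_row (Num 0)) (Seq (Assign r_col (Num 0))
     (Seq (Assign r_hi (Num 0)) (While (Less (Reg r_i) (Reg r_n)) table_step_com))))"

definition size_com :: com where
  "size_com = Seq (Assign r_row (Num 0)) (Seq (Assign r_n (Num 0))
     (While (Less (Reg r_row) (Reg r_h))
        (Seq (Assign r_n (Add (Reg r_n) (Reg r_w))) (Assign r_row (Add (Reg r_row) (Num 1))))))"

definition main_com :: com where
  "main_com = Seq size_com (Seq table_com bsearch_com)"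

definition fire_prog :: com where
  "fire_prog = Seq (Assign r_h (Load (Num 0))) (Seq (Assign r_w (Load (Num 1)))
     (If (Eq (Reg r_w) (Num 1)) Skip main_com))"

fun bits :: "nat \<Rightarrow> nat" where
  "bits d = (if d = 0 then 0 else Suc (bits (d div 2)))"

declare bits.simps [simp del]

lemma bits_mono: "a \<le> b \<Longrightarrow> bits a \<le> bits b"
proof (induction b arbitrary: a rule: less_induct)
  case (less b)
  show ?case
  proof (cases "a = 0")
    case False
    then have "bits (a div 2) \<le> bits (b div 2)"
      using less by (intro less.IH) auto
    with False less.prems show ?thesis
      by (subst bits.simps, subst (2) bits.simps) simp
  qed (simp add: bits.simps)
qed

lemma bits_le_log: "0 < d \<Longrightarrow> real (bits d) \<le> log 2 (real d) + 1"
proof (induction d rule: less_induct)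
  case (less d)
  show ?case
  proof (cases "d = 1")
    case False
    then have d2: "0 < d div 2" "d div 2 < d" using less.prems by auto
    have "real (bits d) = 1 + real (bits (d div 2))"
      using less.prems by (subst bits.simps) simp
    also have "\<dots> \<le> 1 + (log 2 (real (d div 2)) + 1)"
      using less.IH[OF d2(2,1)] by simp
    also have "log 2 (real (d div 2)) + 1 = log 2 (2 * real (d div 2))"
      using d2 by (simp add: log_mult)
    also have "\<dots> \<le> log 2 (real d)"
      using d2 by (intro log_le_cancel_iff[THEN iffD2]) linarith+
    finally show ?thesis by simp
  qed (simp add: bits.simps)
qed

locale ram_input =
  fixes h w :: nat and x0 y0 :: "cell \<Rightarrow> nat"
  assumes two_columns: "2 \<le> w" and one_row: "1 \<le> h"
begin

abbreviation "n \<equiv> h * w"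
abbreviation "R \<equiv> {c. in_region h w c}"

definition idx :: "cell \<Rightarrow> nat" where
  "idx c = fst c * w + snd c"

definition cell_of :: "nat \<Rightarrow> cell" where
  "cell_of m = (m div w, m mod w)"

lemma idx_less: "in_region h w c \<Longrightarrow> idx c < n"
proof -
  assume "in_region h w c"
  then have "fst c < h" "snd c < w" by (auto simp: in_region_def)
  then have "fst c * w + snd c < (fst c + 1) * w" by simp
  also have "\<dots> \<le> h * w" using \<open>fst c < h\<close> by (intro mult_right_mono) auto
  finally show ?thesis by (simp add: idx_def)
qed

lemma cell_of_idx [simp]: "in_region h w c \<Longrightarrow> cell_of (idx c) = c"
  by (cases c) (auto simp: cell_of_def idx_def in_region_def)

lemma idx_cell_of [simp]: "idx (cell_of m) = m"
  by (simp add: cell_of_def idx_def)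

lemma idx_div [simp]: "in_region h w c \<Longrightarrow> idx c div w = fst c"
  and idx_mod [simp]: "in_region h w c \<Longrightarrow> idx c mod w = snd c"
  using cell_of_idx[of c] by (simp_all add: cell_of_def prod_eq_iff)

lemma in_region_cell_of: "m < n \<Longrightarrow> in_region h w (cell_of m)"
  using two_columns by (auto simp: cell_of_def in_region_def less_mult_imp_div_less)

lemma idx_inj: "in_region h w c \<Longrightarrow> in_region h w d \<Longrightarrow> idx c = idx d \<longleftrightarrow> c = d"
  by (metis cell_of_idx)

lemma cell_of_image: "cell_of ` {..<n} = R"
  using idx_less in_region_cell_of by (force simp: image_iff)

lemma inj_on_cell_of: "inj_on cell_of A"
  by (metis idx_cell_of inj_onI)

definition input_ok :: "state \<Rightarrow> bool" where
  "input_ok s \<longleftrightarrow> fst s r_h = int h \<and> fst s r_w = int w \<and> fst s r_n = int n \<and>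
     (\<forall>m<n. snd s (2 + int m) = int (x0 (cell_of m)) \<and> snd s (2 + int n + int m) = int (y0 (cell_of m)))"

definition coords_ok :: "state \<Rightarrow> bool" where
  "coords_ok s \<longleftrightarrow>
     (\<forall>m<n. snd s (ad arr_row (int m)) = int (m div w) \<and> snd s (ad arr_col (int m)) = int (m mod w))"

lemma input_ok_upd_reg [simp]:
  "q \<noteq> r_h \<Longrightarrow> q \<noteq> r_w \<Longrightarrow> q \<noteq> r_n \<Longrightarrow> input_ok (f(q := v), mem) = input_ok (f, mem)"
  by (simp add: input_ok_def)

lemma input_ok_upd_mem [simp]: "0 \<le> m \<Longrightarrow> input_ok (f, mem(ad j m := v)) = input_ok (f, mem)"
proof -
  assume m: "0 \<le> m"
  have "0 \<le> int h * int w" by simp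
  then have "\<And>i. 2 + int i \<noteq> ad j m" "\<And>i. 2 + int h * int w + int i \<noteq> ad j m"
    using ad_neg[OF m, of j] by linarith+
  then show ?thesis by (simp add: input_ok_def)
qed

lemma coords_ok_upd_reg [simp]: "coords_ok (f(q := v), mem) = coords_ok (f, mem)"
  by (simp add: coords_ok_def)

lemma coords_ok_upd_mem [simp]: "j < 3 \<Longrightarrow> coords_ok (f, mem(ad j m := v)) = coords_ok (f, mem)"
  by (simp add: coords_ok_def)

lemma input_ok_x: "input_ok s \<Longrightarrow> in_region h w c \<Longrightarrow> snd s (2 + int (idx c)) = int (x0 c)"
  unfolding input_ok_def using idx_less[of c] by auto

lemma input_ok_y: "input_ok s \<Longrightarrow> in_region h w c \<Longrightarrow> snd s (2 + fst s r_n + int (idx c)) = int (y0 c)"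
  unfolding input_ok_def using idx_less[of c] by auto

lemma coords_ok_row: "coords_ok s \<Longrightarrow> in_region h w c \<Longrightarrow> snd s (ad arr_row (int (idx c))) = int (fst c)"
  unfolding coords_ok_def using idx_less[of c] by auto

lemma coords_ok_col: "coords_ok s \<Longrightarrow> in_region h w c \<Longrightarrow> snd s (ad arr_col (int (idx c))) = int (snd c)"
  unfolding coords_ok_def using idx_less[of c] by auto

definition wl_repr :: "int \<Rightarrow> int \<Rightarrow> nat \<Rightarrow> state \<Rightarrow> wl_state \<Rightarrow> bool" where
  "wl_repr lo hi k s st \<longleftrightarrow> (case st of (acc, mark, stk) \<Rightarrow>
     input_ok s \<and> coords_ok s \<and> fst s r_lo = lo \<and> fst s r_hi = hi \<and> fst s r_k = int k \<and>
     fst s r_top = int (length stk) \<and>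
     (\<forall>c\<in>R. snd s (ad arr_acc (int (idx c))) = int (acc c) \<and>
        snd s (ad arr_mark (int (idx c))) = (if c \<in> mark then 1 else 0)) \<and>
     (\<forall>q<length stk. snd s (ad arr_stack (int q)) = int (idx (stk ! q))))"

lemma relax_com_correct:
  assumes repr: "wl_repr lo hi k s (acc, mark, stk)" and cur: "fst s r_cur = int (idx c)"
    and c: "in_region h w c" and d: "in_region h w d" and e: "aval e s = int (idx d)"
  shows "runs (relax_com e) s (\<lambda>t s'. wl_repr lo hi k s' (worklist.relax x0 y0 k c d (acc, mark, stk)) \<and>
    fst s' r_cur = int (idx c) \<and> t \<le> 8)"
proof -
  have frame: "input_ok s" "coords_ok s" "fst s r_lo = lo" "fst s r_hi = hi" "fst s r_k = int k"
      "fst s r_top = int (length stk)"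
    and arrays: "\<forall>c\<in>R. snd s (ad arr_acc (int (idx c))) = int (acc c) \<and>
      snd s (ad arr_mark (int (idx c))) = (if c \<in> mark then 1 else 0)"
    and stack: "\<forall>q<length stk. snd s (ad arr_stack (int q)) = int (idx (stk ! q))"
    using repr unfolding wl_repr_def prod.case by blast+
  have accd: "snd s (ad arr_acc (int (idx d))) = int (acc d)"
    and markd: "snd s (ad arr_mark (int (idx d))) = (if d \<in> mark then 1 else 0)"
    using bspec[OF arrays, of d] d by simp_all
  have yc: "snd s (2 + fst s r_n + int (idx c)) = int (y0 c)" using input_ok_y[OF frame(1) c] .
  have yd: "snd s (2 + fst s r_n + int (idx d)) = int (y0 d)" using input_ok_y[OF frame(1) d] .
  have xd: "snd s (2 + int (idx d)) = int (x0 d)" using input_ok_x[OF frame(1) d] .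
  have n: "fst s r_n = int h * int w" using frame(1) by (simp add: input_ok_def)
  have "0 \<le> int h * int w" by simp
  then have input_not_array: "\<And>j m. 0 \<le> m \<Longrightarrow> 2 + int h * int w + int (idx d) \<noteq> ad j m"
      "\<And>j m. 0 \<le> m \<Longrightarrow> 2 + int (idx d) \<noteq> ad j m"
      "\<And>j m. 0 \<le> m \<Longrightarrow> 2 + int h * int w + int (idx c) \<noteq> ad j m"
    using ad_neg by (metis add_nonneg_nonneg le_less_trans not_le of_nat_0_le_iff zero_le_numeral)+
  let ?a = "acc(d := acc d + y0 c)"
  show ?thesis
  proof (cases "d \<notin> mark \<and> 0 < y0 d \<and> x0 d + k \<le> ?a d")
    case True
    then have "worklist.relax x0 y0 k c d (acc, mark, stk) = (?a, insert d mark, stk @ [d])"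
      by (simp add: worklist.relax_def)
    then show ?thesis
      unfolding relax_com_def push_com_def
      using True frame accd markd yc yd xd e cur input_not_array n arrays stack idx_inj[OF _ d] d
      by (simp add: wl_repr_def nth_append del: split_paired_All)
  next
    case False
    then have "worklist.relax x0 y0 k c d (acc, mark, stk) = (?a, mark, stk)"
      by (auto simp: worklist.relax_def)
    then show ?thesis
      unfolding relax_com_def push_com_def
      using False frame accd markd yc yd xd e cur input_not_array n arrays stack idx_inj[OF _ d] d
      by (simp add: wl_repr_def nth_append del: split_paired_All) auto
  qed
qed

definition wl_repr_at :: "int \<Rightarrow> int \<Rightarrow> nat \<Rightarrow> cell \<Rightarrow> state \<Rightarrow> wl_state \<Rightarrow> bool" where
  "wl_repr_at lo hi k c s st \<longleftrightarrow> wl_repr lo hi k s st \<and> fst s r_cur = int (idx c)"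

definition relaxes :: "int \<Rightarrow> int \<Rightarrow> nat \<Rightarrow> cell \<Rightarrow> com \<Rightarrow> cell list \<Rightarrow> nat \<Rightarrow> bool" where
  "relaxes lo hi k c C ds K \<longleftrightarrow> (\<forall>s st. wl_repr_at lo hi k c s st \<longrightarrow>
     runs C s (\<lambda>t s'. wl_repr_at lo hi k c s' (fold (worklist.relax x0 y0 k c) ds st) \<and> t \<le> K))"

lemma relaxes_Seq:
  assumes "relaxes lo hi k c C1 ds K1" "relaxes lo hi k c C2 ds' K2"
  shows "relaxes lo hi k c (Seq C1 C2) (ds @ ds') (K1 + K2)"
  unfolding relaxes_def
proof (intro allI impI)
  fix s st assume repr: "wl_repr_at lo hi k c s st"
  let ?f = "fold (worklist.relax x0 y0 k c)"
  show "runs (Seq C1 C2) s (\<lambda>t s'. wl_repr_at lo hi k c s' (?f (ds @ ds') st) \<and> t \<le> K1 + K2)"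
    unfolding runs_Seq
  proof (rule runs_mono)
    show "runs C1 s (\<lambda>t s'. wl_repr_at lo hi k c s' (?f ds st) \<and> t \<le> K1)"
      using assms(1) repr unfolding relaxes_def by blast
  next
    fix t1 s1 assume 1: "wl_repr_at lo hi k c s1 (?f ds st) \<and> t1 \<le> K1"
    then have "runs C2 s1 (\<lambda>t s'. wl_repr_at lo hi k c s' (?f ds' (?f ds st)) \<and> t \<le> K2)"
      using assms(2) unfolding relaxes_def by blast
    then show "runs C2 s1 (\<lambda>t2 s2. wl_repr_at lo hi k c s2 (?f (ds @ ds') st) \<and> t1 + t2 \<le> K1 + K2)"
      by (rule runs_mono) (use 1 in auto)
  qed
qed

lemma relaxes_If:
  assumes "relaxes lo hi k c C1 ds K" "relaxes lo hi k c C2 ds' K"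
    and cond: "\<And>s st. wl_repr_at lo hi k c s st \<Longrightarrow> bval b s \<longleftrightarrow> P"
  shows "relaxes lo hi k c (If b C1 C2) (if P then ds else ds') (K + 1)"
  using assms unfolding relaxes_def by (auto elim!: runs_mono)

lemma relaxes_guard:
  assumes "P \<Longrightarrow> relaxes lo hi k c C ds K" "1 \<le> K"
    and cond: "\<And>s st. wl_repr_at lo hi k c s st \<Longrightarrow> bval b s \<longleftrightarrow> P"
  shows "relaxes lo hi k c (If b C Skip) (if P then ds else []) (K + 1)"
  using assms unfolding relaxes_def by (cases P) (auto elim!: runs_mono)

lemma relaxes_relax_if:
  assumes c: "in_region h w c"
    and cond: "\<And>s st. wl_repr_at lo hi k c s st \<Longrightarrow> bval b s \<longleftrightarrow> P"
    and tgt: "P \<Longrightarrow> in_region h w d \<and> (\<forall>s st. wl_repr_at lo hi k c s st \<longrightarrow> aval e s = int (idx d))"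
  shows "relaxes lo hi k c (relax_if b e) (if P then [d] else []) 9"
proof -
  have "relaxes lo hi k c (relax_com e) [d] 8" if P
    unfolding relaxes_def
  proof (intro allI impI)
    fix s st assume repr: "wl_repr_at lo hi k c s st"
    obtain acc mark stk where st: "st = (acc, mark, stk)" by (cases st)
    have d: "in_region h w d" and e: "aval e s = int (idx d)"
      using tgt[OF \<open>P\<close>] repr by blast+
    have "runs (relax_com e) s (\<lambda>t s'. wl_repr lo hi k s' (worklist.relax x0 y0 k c d (acc, mark, stk)) \<and>
        fst s' r_cur = int (idx c) \<and> t \<le> 8)"
      using repr c d e unfolding wl_repr_at_def st by (intro relax_com_correct) auto
    then show "runs (relax_com e) s
        (\<lambda>t s'. wl_repr_at lo hi k c s' (fold (worklist.relax x0 y0 k c) [d] st) \<and> t \<le> 8)"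
      unfolding st wl_repr_at_def by simp
  qed
  from relaxes_guard[OF this _ cond] show ?thesis
    by (simp add: relax_if_def)
qed

lemma relaxes_relax_if2:
  assumes c: "in_region h w c"
    and cond1: "\<And>s st. wl_repr_at lo hi k c s st \<Longrightarrow> bval b1 s \<longleftrightarrow> P1"
    and cond2: "\<And>s st. wl_repr_at lo hi k c s st \<Longrightarrow> bval b2 s \<longleftrightarrow> P2"
    and tgt: "P1 \<and> P2 \<Longrightarrow> in_region h w d \<and> (\<forall>s st. wl_repr_at lo hi k c s st \<longrightarrow> aval e s = int (idx d))"
  shows "relaxes lo hi k c (If b1 (relax_if b2 e) Skip) (if P1 \<and> P2 then [d] else []) 10"
proof -
  have "relaxes lo hi k c (relax_if b2 e) (if P2 then [d] else []) 9" if P1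
    using cond2 tgt that by (intro relaxes_relax_if[OF c]) auto
  from relaxes_guard[OF this _ cond1] show ?thesis
    by (cases P1) simp_all
qed

lemma wl_repr_at_registers:
  assumes "wl_repr_at lo hi k c s st" "in_region h w c"
  shows "aval col_cur s = int (snd c) \<and> aval row_cur s = int (fst c) \<and> fst s r_h = int h \<and>
    fst s r_w = int w \<and> fst s r_cur = int (fst c) * int w + int (snd c)"
proof -
  obtain acc mark stk where st: "st = (acc, mark, stk)" by (cases st)
  have "input_ok s" "coords_ok s" "fst s r_cur = int (idx c)"
    using assms(1) unfolding wl_repr_at_def wl_repr_def st prod.case by blast+
  then show ?thesis
    using coords_ok_row[of s c] coords_ok_col[of s c] assms(2)
    by (auto simp: col_cur_def row_cur_def input_ok_def idx_def)
qed

lemma relax_nbrs_correct: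
  assumes c: "in_region h w c"
  shows "relaxes lo hi k c relax_nbrs_com (nbr_list h w c) 57"
proof -
  obtain i j where ij: "c = (i, j)" by (cases c)
  have r: "i < h" "j < w" using c ij by (auto simp: in_region_def)
  have reg: "aval col_cur (f, mem) = int j \<and> aval row_cur (f, mem) = int i \<and> f r_h = int h \<and>
      f r_w = int w \<and> f r_cur = int i * int w + int j"
    if "wl_repr_at lo hi k c (f, mem) st" for f mem st
    using wl_repr_at_registers[OF that c] ij by simp
  have idx: "int (idx (a, b)) = int a * int w + int b" for a b
    by (simp add: idx_def)
  note relax_if = relaxes_relax_if[OF c] and relax_if2 = relaxes_relax_if2[OF c]
  note arith = idx in_region_def r less_imp_diff_less of_nat_diff algebra_simps
  have E: "relaxes lo hi k c (relax_if (Less (Add col_cur (Num 1)) (Reg r_w)) (Add (Reg r_cur) (Num 1)))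
      (if j + 1 < w then [(i, j + 1)] else []) 9"
    by (rule relax_if) (auto dest!: reg simp: arith)
  have W: "relaxes lo hi k c (relax_if (Less (Num 0) col_cur) (Sub (Reg r_cur) (Num 1)))
      (if 0 < j then [(i, j - 1)] else []) 9"
    by (rule relax_if) (auto dest!: reg simp: arith)
  have N: "relaxes lo hi k c (relax_if (Less (Add row_cur (Num 1)) (Reg r_h)) (Add (Reg r_cur) (Reg r_w)))
      (if i + 1 < h then [(i + 1, j)] else []) 9"
    by (rule relax_if) (auto dest!: reg simp: arith)
  have S: "relaxes lo hi k c (relax_if (Less (Num 0) row_cur) (Sub (Reg r_cur) (Reg r_w)))
      (if 0 < i then [(i - 1, j)] else []) 9"
    by (rule relax_if) (auto dest!: reg simp: arith)
  have NE: "relaxes lo hi k c (If (Less (Add col_cur (Num 1)) (Reg r_w))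
        (relax_if (Less (Add row_cur (Num 1)) (Reg r_h)) (Add (Add (Reg r_cur) (Reg r_w)) (Num 1))) Skip)
      (if j + 1 < w \<and> i + 1 < h then [(i + 1, j + 1)] else []) 10"
    by (rule relax_if2) (auto dest!: reg simp: arith)
  have SE: "relaxes lo hi k c (If (Less (Add col_cur (Num 1)) (Reg r_w))
        (relax_if (Less (Num 0) row_cur) (Add (Sub (Reg r_cur) (Reg r_w)) (Num 1))) Skip)
      (if j + 1 < w \<and> 0 < i then [(i - 1, j + 1)] else []) 10"
    by (rule relax_if2) (auto dest!: reg simp: arith)
  have NW: "relaxes lo hi k c (If (Less (Num 0) col_cur)
        (relax_if (Less (Add row_cur (Num 1)) (Reg r_h)) (Sub (Add (Reg r_cur) (Reg r_w)) (Num 1))) Skip)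
      (if 0 < j \<and> i + 1 < h then [(i + 1, j - 1)] else []) 10"
    by (rule relax_if2) (auto dest!: reg simp: arith)
  have SW: "relaxes lo hi k c (If (Less (Num 0) col_cur)
        (relax_if (Less (Num 0) row_cur) (Sub (Sub (Reg r_cur) (Reg r_w)) (Num 1))) Skip)
      (if 0 < j \<and> 0 < i then [(i - 1, j - 1)] else []) 10"
    by (rule relax_if2) (auto dest!: reg simp: arith)
  have parity: "bval (Eq (Sub row_cur (Add (Half row_cur) (Half row_cur))) (Num 1)) s \<longleftrightarrow> odd i"
    if "wl_repr_at lo hi k c s st" for s st
    using reg[of "fst s" "snd s" st] that by simp presburger
  from relaxes_Seq[OF E relaxes_Seq[OF W relaxes_Seq[OF N relaxes_Seq[OF S
      relaxes_If[OF relaxes_Seq[OF NE SE] relaxes_Seq[OF NW SW] parity]]]]]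
  show ?thesis by (simp add: relax_nbrs_com_def ij)
qed

lemma wl_inv_region:
  assumes "worklist.wl_inv h w x0 y0 k (acc, mark, stk)"
  shows "mark \<subseteq> R" "set stk \<subseteq> mark"
  using worklist.wl_invD(1)[OF assms] by (simp_all add: worklist.marks_ok_def)

text \<open>One round of the worklist loop, including its test, takes at most 60 steps.\<close>

definition wl_cost :: "state \<Rightarrow> nat" where
  "wl_cost s = 60 * (nat (fst s r_top) + card {c \<in> R. snd s (ad arr_mark (int (idx c))) = 0})"

lemma wl_cost_eq:
  assumes "wl_repr lo hi k s (acc, mark, stk)" "mark \<subseteq> R"
  shows "wl_cost s = 60 * worklist.potential h w (acc, mark, stk)"
proof -
  have "\<forall>c\<in>R. snd s (ad arr_mark (int (idx c))) = (if c \<in> mark then 1 else 0)"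
    and top: "fst s r_top = int (length stk)"
    using assms(1) unfolding wl_repr_def prod.case by blast+
  then have "{c \<in> R. snd s (ad arr_mark (int (idx c))) = 0} = R - mark"
    using assms(2) by auto
  with top show ?thesis
    by (simp add: wl_cost_def worklist.potential_def)
qed

lemma wl_repr_pop:
  assumes "wl_repr lo hi k s (acc, mark, stk)" and ne: "stk \<noteq> []"
  shows "snd s (ad arr_stack (int (length stk) - 1)) = int (idx (last stk))"
    and "wl_repr_at lo hi k (last stk)
      ((fst s)(r_top := int (length stk) - 1, r_cur := int (idx (last stk))), snd s)
      (acc, mark, butlast stk)"
proof -
  have frame: "input_ok s" "coords_ok s" "fst s r_lo = lo" "fst s r_hi = hi" "fst s r_k = int k"
    and arrays: "\<forall>c\<in>R. snd s (ad arr_acc (int (idx c))) = int (acc c) \<and>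
      snd s (ad arr_mark (int (idx c))) = (if c \<in> mark then 1 else 0)"
    and stack: "\<forall>q<length stk. snd s (ad arr_stack (int q)) = int (idx (stk ! q))"
    using assms(1) unfolding wl_repr_def prod.case by blast+
  have top_1: "int (length stk - Suc 0) = int (length stk) - 1" using ne by (cases stk) auto
  have "stk ! (length stk - 1) = last stk" using ne by (simp add: last_conv_nth)
  then show "snd s (ad arr_stack (int (length stk) - 1)) = int (idx (last stk))"
    using stack ne top_1 by (metis One_nat_def diff_less length_greater_0_conv zero_less_one)
  show "wl_repr_at lo hi k (last stk)
      ((fst s)(r_top := int (length stk) - 1, r_cur := int (idx (last stk))), snd s)
      (acc, mark, butlast stk)"
    unfolding wl_repr_at_def wl_repr_def prod.case using frame arrays stack ne
    by (simp add: nth_butlast top_1)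
qed

lemma wl_step_com_correct:
  assumes repr: "wl_repr lo hi k s (acc, mark, stk)"
    and inv: "worklist.wl_inv h w x0 y0 k (acc, mark, stk)"
    and nonempty: "bval (Less (Num 0) (Reg r_top)) s"
  shows "runs wl_step_com s (\<lambda>t s'. (\<exists>st'. wl_repr lo hi k s' st' \<and> worklist.wl_inv h w x0 y0 k st') \<and>
    t + 1 + wl_cost s' \<le> wl_cost s)"
proof -
  let ?st = "(acc, mark, stk)" and ?c = "last stk"
  have top: "fst s r_top = int (length stk)"
    using repr unfolding wl_repr_def by simp
  then have ne: "stk \<noteq> []" using nonempty by auto
  have c: "in_region h w ?c" using wl_inv_region[OF inv] last_in_set[OF ne] by blast
  define s1 where "s1 = ((fst s)(r_top := int (length stk) - 1, r_cur := int (idx ?c)), snd s)"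
  have "runs relax_nbrs_com s1 (\<lambda>t s'. wl_repr_at lo hi k ?c s'
      (fold (worklist.relax x0 y0 k ?c) (nbr_list h w ?c) (acc, mark, butlast stk)) \<and> t \<le> 57)"
    using relax_nbrs_correct[OF c, of lo hi k] wl_repr_pop(2)[OF repr ne] unfolding relaxes_def s1_def
    by blast
  then have relaxed: "runs relax_nbrs_com s1 (\<lambda>t s'.
      wl_repr_at lo hi k ?c s' (worklist.wl_step h w x0 y0 k ?st) \<and> t \<le> 57)"
    by (simp add: worklist.wl_step_def)
  have inv': "worklist.wl_inv h w x0 y0 k (worklist.wl_step h w x0 y0 k ?st)"
    using worklist.wl_step_preserves_inv[OF inv ne] .
  have pot: "worklist.potential h w (worklist.wl_step h w x0 y0 k ?st) + 1 = worklist.potential h w ?st"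
    using worklist.potential_wl_step[OF inv ne] .
  have cost: "wl_cost s = 60 * worklist.potential h w ?st"
    using wl_cost_eq[OF repr wl_inv_region(1)[OF inv]] .
  have "runs relax_nbrs_com s1 (\<lambda>t s'. (\<exists>st'. wl_repr lo hi k s' st' \<and> worklist.wl_inv h w x0 y0 k st') \<and>
      Suc (Suc t) + 1 + wl_cost s' \<le> wl_cost s)"
  proof (rule runs_mono[OF relaxed])
    fix t :: nat and s' assume a: "wl_repr_at lo hi k ?c s' (worklist.wl_step h w x0 y0 k ?st) \<and> t \<le> 57"
    obtain acc' mark' stk' where st': "worklist.wl_step h w x0 y0 k ?st = (acc', mark', stk')"
      by (cases "worklist.wl_step h w x0 y0 k ?st")
    have "wl_repr lo hi k s' (acc', mark', stk')"
      using a st' by (simp add: wl_repr_at_def)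
    moreover have "wl_cost s' = 60 * worklist.potential h w (acc', mark', stk')"
      using wl_cost_eq[OF calculation wl_inv_region(1)] inv' st' by simp
    ultimately show "(\<exists>st'. wl_repr lo hi k s' st' \<and> worklist.wl_inv h w x0 y0 k st') \<and>
        Suc (Suc t) + 1 + wl_cost s' \<le> wl_cost s"
      using inv' st' pot cost a by auto
  qed
  then show ?thesis
    unfolding wl_step_com_def using top wl_repr_pop(1)[OF repr ne] by (simp add: s1_def)
qed

lemma worklist_correct:
  assumes repr: "wl_repr lo hi k s (acc, mark, stk)"
    and inv: "worklist.wl_inv h w x0 y0 k (acc, mark, stk)"
  shows "runs worklist_com s (\<lambda>t s'.
    (\<exists>acc. wl_repr lo hi k s' (acc, burnt h w (raised_x w x0 k) y0, [])) \<and> t \<le> 60 * n + 1)"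
proof -
  have loop: "runs worklist_com s (\<lambda>t s'. (\<exists>st. wl_repr lo hi k s' st \<and> worklist.wl_inv h w x0 y0 k st) \<and>
      \<not> bval (Less (Num 0) (Reg r_top)) s' \<and> t \<le> wl_cost s + 1)"
    unfolding worklist_com_def
  proof (rule runs_While)
    fix s assume "\<exists>st. wl_repr lo hi k s st \<and> worklist.wl_inv h w x0 y0 k st"
      and nonempty: "bval (Less (Num 0) (Reg r_top)) s"
    then obtain st where st: "wl_repr lo hi k s st" "worklist.wl_inv h w x0 y0 k st"
      by blast
    obtain a m l where "st = (a, m, l)" by (cases st)
    with st have "wl_repr lo hi k s (a, m, l)" "worklist.wl_inv h w x0 y0 k (a, m, l)"
      by simp_all
    from wl_step_com_correct[OF this nonempty]
    show "runs wl_step_com s (\<lambda>t s'. (\<exists>st. wl_repr lo hi k s' st \<and> worklist.wl_inv h w x0 y0 k st) \<and>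
        t + 1 + wl_cost s' \<le> wl_cost s)" .
  qed (use repr inv in blast)
  have "wl_cost s = 60 * worklist.potential h w (acc, mark, stk)"
    using wl_cost_eq[OF repr wl_inv_region(1)[OF inv]] .
  also have "\<dots> \<le> 60 * n"
    using worklist.potential_le[OF inv] by simp
  finally have cost: "wl_cost s \<le> 60 * n" .
  show ?thesis
  proof (rule runs_mono[OF loop], elim conjE exE)
    fix t s' st' assume repr': "wl_repr lo hi k s' st'" and inv': "worklist.wl_inv h w x0 y0 k st'"
      and stop: "\<not> bval (Less (Num 0) (Reg r_top)) s'" and t: "t \<le> wl_cost s + 1"
    obtain acc' mark' stk' where st': "st' = (acc', mark', stk')" by (cases st')
    have "stk' = []"
      using repr' stop st' by (simp add: wl_repr_def)
    then have "mark' = burnt h w (raised_x w x0 k) y0"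
      using worklist.wl_inv_empty_stack inv' st' by blast
    with repr' st' \<open>stk' = []\<close> t cost
    show "(\<exists>acc. wl_repr lo hi k s' (acc, burnt h w (raised_x w x0 k) y0, [])) \<and> t \<le> 60 * n + 1"
      by auto
  qed
qed

abbreviation seeds :: "nat \<Rightarrow> cell set" where
  "seeds k \<equiv> worklist.seeds h w x0 y0 k"

definition seed_list :: "nat \<Rightarrow> nat \<Rightarrow> cell list" where
  "seed_list k m = filter (\<lambda>c. c \<in> seeds k) (map cell_of [0..<m])"

lemma seed_list_props: "set (seed_list k n) = seeds k" "distinct (seed_list k n)"
proof -
  have "set (map cell_of [0..<n]) = R"
    using cell_of_image by (simp add: lessThan_atLeast0)
  moreover have "seeds k \<subseteq> R"
    by (auto simp: worklist.seeds_def)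
  ultimately show "set (seed_list k n) = seeds k"
    unfolding seed_list_def by auto
  show "distinct (seed_list k n)"
    unfolding seed_list_def using inj_on_cell_of by (simp add: distinct_map)
qed

lemma seeds_iff: "in_region h w c \<Longrightarrow> c \<in> seeds k \<longleftrightarrow> 0 < y0 c \<and> (snd c = w - 1 \<or> x0 c + k = 0)"
  unfolding worklist.seeds_def raised_x_def by auto

definition init_inv :: "int \<Rightarrow> int \<Rightarrow> nat \<Rightarrow> nat \<Rightarrow> state \<Rightarrow> bool" where
  "init_inv lo hi k m s \<longleftrightarrow> input_ok s \<and> coords_ok s \<and> fst s r_lo = lo \<and> fst s r_hi = hi \<and>
     fst s r_k = int k \<and> m \<le> n \<and> fst s r_i = int m \<and>
     (\<forall>m'<m. snd s (ad arr_acc (int m')) = 0 \<and>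
        snd s (ad arr_mark (int m')) = (if cell_of m' \<in> seeds k then 1 else 0)) \<and>
     fst s r_top = int (length (seed_list k m)) \<and>
     (\<forall>q<length (seed_list k m). snd s (ad arr_stack (int q)) = int (idx (seed_list k m ! q)))"

lemma init_step_correct:
  assumes inv: "init_inv lo hi k m s" and m: "m < n"
  shows "runs init_step_com s (\<lambda>t s'. init_inv lo hi k (Suc m) s' \<and> t \<le> 11)"
proof -
  have frame: "input_ok s" "coords_ok s" "fst s r_lo = lo" "fst s r_hi = hi" "fst s r_k = int k"
      "fst s r_i = int m"
    and arrays: "\<forall>m'<m. snd s (ad arr_acc (int m')) = 0 \<and>
      snd s (ad arr_mark (int m')) = (if cell_of m' \<in> seeds k then 1 else 0)"
    and top: "fst s r_top = int (length (seed_list k m))"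
    and stack: "\<forall>q<length (seed_list k m). snd s (ad arr_stack (int q)) = int (idx (seed_list k m ! q))"
    using inv unfolding init_inv_def by blast+
  let ?c = "cell_of m"
  have c: "in_region h w ?c" using in_region_cell_of[OF m] .
  have y: "snd s (2 + fst s r_n + int m) = int (y0 ?c)" using input_ok_y[OF frame(1) c] by simp
  have x: "snd s (2 + int m) = int (x0 ?c)" using input_ok_x[OF frame(1) c] by simp
  have col: "snd s (ad arr_col (int m)) = int (snd ?c)" using coords_ok_col[OF frame(2) c] by simp
  have n: "fst s r_n = int h * int w" "fst s r_w = int w" using frame(1) by (simp_all add: input_ok_def)
  have "0 \<le> int h * int w" by simp
  then have input_not_array: "\<And>j x. 0 \<le> x \<Longrightarrow> 2 + int h * int w + int m \<noteq> ad j x"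
      "\<And>j x. 0 \<le> x \<Longrightarrow> 2 + int m \<noteq> ad j x"
    using ad_neg by (metis add_nonneg_nonneg le_less_trans not_le of_nat_0_le_iff zero_le_numeral)+
  have seed_list: "seed_list k (Suc m) = seed_list k m @ (if ?c \<in> seeds k then [?c] else [])"
    by (simp add: seed_list_def)
  have last_col: "int (snd ?c) = int w - 1 \<longleftrightarrow> snd ?c = w - 1" using two_columns by auto
  show ?thesis
  proof (cases "?c \<in> seeds k")
    case True
    then show ?thesis
      unfolding init_step_com_def seed_com_def init_inv_def
      using seeds_iff[OF c, of k] frame arrays top stack y x col n input_not_array seed_list last_col m
      by (simp add: nth_append less_Suc_eq del: split_paired_All) auto
  next
    case False
    then show ?thesis
      unfolding init_step_com_def seed_com_def init_inv_def
      using seeds_iff[OF c, of k] frame arrays top stack y x col n input_not_array seed_list last_col m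
      by (simp add: nth_append less_Suc_eq del: split_paired_All)
  qed
qed

lemma init_correct:
  assumes "input_ok s" "coords_ok s" "fst s r_lo = lo" "fst s r_hi = hi" "fst s r_k = int k"
  shows "runs init_com s (\<lambda>t s'. wl_repr lo hi k s' ((\<lambda>_. 0), seeds k, seed_list k n) \<and>
    worklist.wl_inv h w x0 y0 k ((\<lambda>_. 0), seeds k, seed_list k n) \<and> t \<le> 12 * n + 3)"
proof -
  define s0 where "s0 = ((fst s)(r_i := 0, r_top := 0), snd s)"
  have "init_inv lo hi k 0 s0"
    using assms by (simp add: init_inv_def s0_def seed_list_def)
  then have loop: "runs (While (Less (Reg r_i) (Reg r_n)) init_step_com) s0
      (\<lambda>t s'. init_inv lo hi k n s' \<and> t \<le> (11 + 1) * n + 1)"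
  proof (rule runs_for_loop)
    fix m s assume "init_inv lo hi k m s"
    then show "fst s r_i = int m \<and> fst s r_n = int n \<and> m \<le> n"
      by (simp add: init_inv_def input_ok_def)
  qed (rule init_step_correct)
  show ?thesis
    unfolding init_com_def runs_Seq runs_Assign
  proof (simp only: prod.collapse fst_conv snd_conv aval.simps s0_def[symmetric], rule runs_mono[OF loop])
    fix t s' assume a: "init_inv lo hi k n s' \<and> t \<le> (11 + 1) * n + 1"
    then have "wl_repr lo hi k s' ((\<lambda>_. 0), seeds k, seed_list k n)"
      unfolding wl_repr_def prod.case init_inv_def using idx_less by auto
    with a show "wl_repr lo hi k s' ((\<lambda>_. 0), seeds k, seed_list k n) \<and>
        worklist.wl_inv h w x0 y0 k ((\<lambda>_. 0), seeds k, seed_list k n) \<and> 1 + (1 + t) \<le> 12 * n + 3"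
      using worklist.wl_inv_init[OF seed_list_props] by simp
  qed
qed

abbreviation burnt_k :: "nat \<Rightarrow> cell set" where
  "burnt_k k \<equiv> burnt h w (raised_x w x0 k) y0"

definition unsafe_cell :: "nat \<Rightarrow> cell \<Rightarrow> bool" where
  "unsafe_cell k c \<longleftrightarrow> snd c = 0 \<and> 0 < x0 c \<and> c \<in> burnt_k k"

definition check_inv :: "int \<Rightarrow> int \<Rightarrow> nat \<Rightarrow> nat \<Rightarrow> state \<Rightarrow> bool" where
  "check_inv lo hi k m s \<longleftrightarrow> input_ok s \<and> coords_ok s \<and> fst s r_lo = lo \<and> fst s r_hi = hi \<and>
     fst s r_k = int k \<and> m \<le> n \<and> fst s r_i = int m \<and>
     (\<forall>c\<in>R. snd s (ad arr_mark (int (idx c))) = (if c \<in> burnt_k k then 1 else 0)) \<and>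
     fst s r_ok = (if (\<forall>m'<m. \<not> unsafe_cell k (cell_of m')) then 1 else 0)"

lemma check_step_correct:
  assumes inv: "check_inv lo hi k m s" and m: "m < n"
  shows "runs check_step_com s (\<lambda>t s'. check_inv lo hi k (Suc m) s' \<and> t \<le> 6)"
proof -
  have frame: "input_ok s" "coords_ok s" "fst s r_lo = lo" "fst s r_hi = hi" "fst s r_k = int k"
      "fst s r_i = int m"
    and marks: "\<forall>c\<in>R. snd s (ad arr_mark (int (idx c))) = (if c \<in> burnt_k k then 1 else 0)"
    and ok: "fst s r_ok = (if (\<forall>m'<m. \<not> unsafe_cell k (cell_of m')) then 1 else 0)"
    using inv unfolding check_inv_def by blast+
  let ?c = "cell_of m"
  have c: "in_region h w ?c" using in_region_cell_of[OF m] .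
  have x: "snd s (2 + int m) = int (x0 ?c)" using input_ok_x[OF frame(1) c] by simp
  have col: "snd s (ad arr_col (int m)) = int (snd ?c)" using coords_ok_col[OF frame(2) c] by simp
  have mark: "snd s (ad arr_mark (int m)) = (if ?c \<in> burnt_k k then 1 else 0)"
    using marks c by (metis idx_cell_of mem_Collect_eq)
  have "(\<forall>m'<Suc m. \<not> unsafe_cell k (cell_of m')) \<longleftrightarrow>
      (\<forall>m'<m. \<not> unsafe_cell k (cell_of m')) \<and> \<not> unsafe_cell k ?c"
    using less_Suc_eq by auto
  then show ?thesis
    unfolding check_step_com_def check_inv_def
    using frame marks ok x col mark m by (auto simp: unsafe_cell_def)
qed

lemma check_correct:
  assumes "wl_repr lo hi k s (acc, burnt_k k, [])"
  shows "runs check_com s (\<lambda>t s'. input_ok s' \<and> coords_ok s' \<and> fst s' r_lo = lo \<and> fst s' r_hi = hi \<and>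
    fst s' r_k = int k \<and> fst s' r_ok = (if safe_raise h w x0 y0 k then 1 else 0) \<and> t \<le> 7 * n + 3)"
proof -
  define s0 where "s0 = ((fst s)(r_ok := 1, r_i := 0), snd s)"
  have "check_inv lo hi k 0 s0"
    using assms unfolding check_inv_def s0_def wl_repr_def by auto
  then have loop: "runs (While (Less (Reg r_i) (Reg r_n)) check_step_com) s0
      (\<lambda>t s'. check_inv lo hi k n s' \<and> t \<le> (6 + 1) * n + 1)"
  proof (rule runs_for_loop)
    fix m s assume "check_inv lo hi k m s"
    then show "fst s r_i = int m \<and> fst s r_n = int n \<and> m \<le> n"
      by (simp add: check_inv_def input_ok_def)
  qed (rule check_step_correct)
  have safe: "(\<forall>m<n. \<not> unsafe_cell k (cell_of m)) \<longleftrightarrow> safe_raise h w x0 y0 k"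
  proof
    assume A: "\<forall>m<n. \<not> unsafe_cell k (cell_of m)"
    show "safe_raise h w x0 y0 k"
      unfolding safe_raise_def
    proof (intro allI impI)
      fix v assume v: "in_region h w v \<and> snd v = 0 \<and> 0 < x0 v"
      then have "idx v < n" "cell_of (idx v) = v" using idx_less by auto
      with A v show "v \<notin> burnt_k k"
        unfolding unsafe_cell_def by metis
    qed
  next
    assume "safe_raise h w x0 y0 k"
    then show "\<forall>m<n. \<not> unsafe_cell k (cell_of m)"
      using in_region_cell_of unfolding safe_raise_def unsafe_cell_def by blast
  qed
  show ?thesis
    unfolding check_com_def runs_Seq runs_Assign
  proof (simp only: prod.collapse fst_conv snd_conv aval.simps fun_upd_upd s0_def[symmetric],
      rule runs_mono[OF loop])
    fix t s' assume "check_inv lo hi k n s' \<and> t \<le> (6 + 1) * n + 1"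
    with safe show "input_ok s' \<and> coords_ok s' \<and> fst s' r_lo = lo \<and> fst s' r_hi = hi \<and>
        fst s' r_k = int k \<and> fst s' r_ok = (if safe_raise h w x0 y0 k then 1 else 0) \<and>
        1 + (1 + t) \<le> 7 * n + 3"
      unfolding check_inv_def by auto
  qed
qed

lemma test_correct:
  assumes "input_ok s" "coords_ok s" "fst s r_lo = lo" "fst s r_hi = hi" "fst s r_k = int k"
  shows "runs test_com s (\<lambda>t s'. input_ok s' \<and> coords_ok s' \<and> fst s' r_lo = lo \<and> fst s' r_hi = hi \<and>
    fst s' r_k = int k \<and> fst s' r_ok = (if safe_raise h w x0 y0 k then 1 else 0) \<and> t \<le> 79 * n + 7)"
  unfolding test_com_def runs_Seq
proof (rule runs_mono[OF init_correct[OF assms]], elim conjE)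
  fix t1 s1 assume repr: "wl_repr lo hi k s1 ((\<lambda>_. 0), seeds k, seed_list k n)"
    and inv: "worklist.wl_inv h w x0 y0 k ((\<lambda>_. 0), seeds k, seed_list k n)" and t1: "t1 \<le> 12 * n + 3"
  show "runs worklist_com s1 (\<lambda>t2 s2. runs check_com s2 (\<lambda>t3 s3. input_ok s3 \<and> coords_ok s3 \<and>
      fst s3 r_lo = lo \<and> fst s3 r_hi = hi \<and> fst s3 r_k = int k \<and>
      fst s3 r_ok = (if safe_raise h w x0 y0 k then 1 else 0) \<and> t1 + (t2 + t3) \<le> 79 * n + 7))"
  proof (rule runs_mono[OF worklist_correct[OF repr inv]], elim conjE exE)
    fix t2 s2 acc assume "wl_repr lo hi k s2 (acc, burnt_k k, [])" and t2: "t2 \<le> 60 * n + 1"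
    from check_correct[OF this(1)]
    show "runs check_com s2 (\<lambda>t3 s3. input_ok s3 \<and> coords_ok s3 \<and> fst s3 r_lo = lo \<and> fst s3 r_hi = hi \<and>
        fst s3 r_k = int k \<and> fst s3 r_ok = (if safe_raise h w x0 y0 k then 1 else 0) \<and>
        t1 + (t2 + t3) \<le> 79 * n + 7)"
      by (rule runs_mono) (use t1 t2 in auto)
  qed
qed

definition bsearch_inv :: "state \<Rightarrow> bool" where
  "bsearch_inv s \<longleftrightarrow> input_ok s \<and> coords_ok s \<and>
     (\<exists>lo hi. fst s r_lo = int lo \<and> fst s r_hi = int hi \<and> lo \<le> hi \<and>
     safe_raise h w x0 y0 hi \<and> (\<forall>k<lo. \<not> safe_raise h w x0 y0 k))"

lemma bsearch_invI:
  "input_ok s \<Longrightarrow> coords_ok s \<Longrightarrow> fst s r_lo = int lo \<Longrightarrow> fst s r_hi = int hi \<Longrightarrow> lo \<le> hi \<Longrightarrow>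
    safe_raise h w x0 y0 hi \<Longrightarrow> \<forall>k<lo. \<not> safe_raise h w x0 y0 k \<Longrightarrow> bsearch_inv s"
  unfolding bsearch_inv_def by blast

text \<open>One round of the binary search, including its test, takes at most 79 n + 12 steps.\<close>

definition bsearch_cost :: "state \<Rightarrow> nat" where
  "bsearch_cost s = (79 * n + 12) * bits (nat (fst s r_hi - fst s r_lo))"

lemma bits_halves:
  assumes "lo < (hi :: nat)"
  shows "bits ((lo + hi) div 2 - lo) < bits (hi - lo)"
    and "bits (hi - Suc ((lo + hi) div 2)) < bits (hi - lo)"
proof -
  have "bits (hi - lo) = Suc (bits ((hi - lo) div 2))"
    using assms by (subst bits.simps) simp
  moreover have "(lo + hi) div 2 - lo = (hi - lo) div 2" "hi - Suc ((lo + hi) div 2) \<le> (hi - lo) div 2"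
    using assms by linarith+
  ultimately show "bits ((lo + hi) div 2 - lo) < bits (hi - lo)"
    and "bits (hi - Suc ((lo + hi) div 2)) < bits (hi - lo)"
    using bits_mono by (simp_all add: le_imp_less_Suc)
qed

lemma bsearch_step_correct:
  assumes "bsearch_inv s" "bval (Less (Reg r_lo) (Reg r_hi)) s"
  shows "runs bsearch_step_com s (\<lambda>t s'. bsearch_inv s' \<and> t + 1 + bsearch_cost s' \<le> bsearch_cost s)"
proof -
  obtain lo hi where frame: "input_ok s" "coords_ok s" "fst s r_lo = int lo" "fst s r_hi = int hi"
    "safe_raise h w x0 y0 hi" "\<forall>k<lo. \<not> safe_raise h w x0 y0 k"
    using assms(1) unfolding bsearch_inv_def by blast
  have lh: "lo < hi" using assms(2) frame by simp
  define mid where "mid = (lo + hi) div 2"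
  have mid: "lo \<le> mid" "mid < hi" using lh by (auto simp: mid_def)
  have mid_eq: "aval (Half (Add (Reg r_lo) (Reg r_hi))) s = int mid"
    using frame by (simp add: mid_def zdiv_int)
  define s1 where "s1 = ((fst s)(r_k := int mid), snd s)"
  have s1: "input_ok s1" "coords_ok s1" "fst s1 r_lo = int lo" "fst s1 r_hi = int hi"
      "fst s1 r_k = int mid"
    using frame by (simp_all add: s1_def)
  have cost: "bsearch_cost s = (79 * n + 12) * bits (hi - lo)"
    unfolding bsearch_cost_def using frame lh by (simp add: nat_diff_distrib)
  have cheaper: "(79 * n + 12) * bits d + (79 * n + 12) \<le> bsearch_cost s"
    if "bits d < bits (hi - lo)" for d
    using mult_le_mono2[OF that[unfolded Suc_le_eq[symmetric]], of "79 * n + 12"] cost by simp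
  show ?thesis
    unfolding bsearch_step_com_def runs_Seq runs_Assign mid_eq s1_def[symmetric]
  proof (rule runs_mono[OF test_correct[OF s1]], elim conjE)
    fix t s' assume s': "input_ok s'" "coords_ok s'" "fst s' r_lo = int lo" "fst s' r_hi = int hi"
      "fst s' r_k = int mid" "fst s' r_ok = (if safe_raise h w x0 y0 mid then 1 else 0)"
      and t: "t \<le> 79 * n + 7"
    show "runs (If (Eq (Reg r_ok) (Num 1)) (Assign r_hi (Reg r_k)) (Assign r_lo (Add (Reg r_k) (Num 1))))
        s'
        (\<lambda>t' s''. bsearch_inv s'' \<and> 1 + (t + t') + 1 + bsearch_cost s'' \<le> bsearch_cost s)"
    proof (cases "safe_raise h w x0 y0 mid")
      case True
      let ?s = "((fst s')(r_hi := int mid), snd s')"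
      have "bsearch_inv ?s"
        using s' True frame mid by (intro bsearch_invI[of _ lo mid]) simp_all
      moreover have "bsearch_cost ?s + (79 * n + 12) \<le> bsearch_cost s"
        using cheaper[OF bits_halves(1)[OF lh, folded mid_def]] s' \<open>lo \<le> mid\<close>
        by (simp add: bsearch_cost_def nat_diff_distrib)
      ultimately show ?thesis using True s' t by simp
    next
      case False
      let ?s = "((fst s')(r_lo := int mid + 1), snd s')"
      have "\<forall>k<Suc mid. \<not> safe_raise h w x0 y0 k"
        using False safe_raise_mono by (metis less_Suc_eq_le)
      then have "bsearch_inv ?s"
        using s' frame mid by (intro bsearch_invI[of _ "Suc mid" hi]) simp_all
      moreover have "bsearch_cost ?s + (79 * n + 12) \<le> bsearch_cost s"
      proof -
        have "nat (int hi - (int mid + 1)) = hi - Suc mid"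
          using \<open>mid < hi\<close> by linarith
        with cheaper[OF bits_halves(2)[OF lh, folded mid_def]] s' show ?thesis
          by (simp add: bsearch_cost_def)
      qed
      ultimately show ?thesis using False s' t by simp
    qed
  qed
qed

lemma bsearch_correct:
  assumes "input_ok s" "coords_ok s" "fst s r_hi = int hi0" "safe_raise h w x0 y0 hi0"
  shows "runs bsearch_com s (\<lambda>t s'. fst s' r_lo = int (LEAST k. safe_raise h w x0 y0 k) \<and>
    t \<le> (79 * n + 12) * bits hi0 + 2)"
proof -
  define s0 where "s0 = ((fst s)(r_lo := 0), snd s)"
  have inv0: "bsearch_inv s0"
    using assms by (intro bsearch_invI[of _ 0 hi0]) (simp_all add: s0_def)
  have cost0: "bsearch_cost s0 = (79 * n + 12) * bits hi0"
    using assms by (simp add: bsearch_cost_def s0_def)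
  have loop: "runs (While (Less (Reg r_lo) (Reg r_hi)) bsearch_step_com) s0 (\<lambda>t s'.
      bsearch_inv s' \<and> \<not> bval (Less (Reg r_lo) (Reg r_hi)) s' \<and> t \<le> bsearch_cost s0 + 1)"
    by (rule runs_While[OF inv0 bsearch_step_correct])
  show ?thesis
    unfolding bsearch_com_def runs_Seq runs_Assign aval.simps s0_def[symmetric]
  proof (rule runs_mono[OF loop], elim conjE)
    fix t s' assume inv: "bsearch_inv s'" and stop: "\<not> bval (Less (Reg r_lo) (Reg r_hi)) s'"
      and t: "t \<le> bsearch_cost s0 + 1"
    from inv obtain lo hi where b: "fst s' r_lo = int lo" "fst s' r_hi = int hi" "lo \<le> hi"
      "safe_raise h w x0 y0 hi" "\<forall>k<lo. \<not> safe_raise h w x0 y0 k"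
      unfolding bsearch_inv_def by blast
    with stop have "(LEAST k. safe_raise h w x0 y0 k) = lo"
      by (intro Least_equality) (auto simp: not_less[symmetric])
    with b t cost0 show "fst s' r_lo = int (LEAST k. safe_raise h w x0 y0 k) \<and>
        1 + t \<le> (79 * n + 12) * bits hi0 + 2"
      by simp
  qed
qed

definition table_inv :: "nat \<Rightarrow> state \<Rightarrow> bool" where
  "table_inv m s \<longleftrightarrow> input_ok s \<and> m \<le> n \<and> fst s r_i = int m \<and>
     fst s r_row = int (m div w) \<and> fst s r_col = int (m mod w) \<and>
     (\<forall>m'<m. snd s (ad arr_row (int m')) = int (m' div w) \<and>
        snd s (ad arr_col (int m')) = int (m' mod w)) \<and>
     fst s r_hi = int (\<Sum>m'<m. y0 (cell_of m'))"

lemma table_step_correct: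
  assumes inv: "table_inv m s" and m: "m < n"
  shows "runs table_step_com s (\<lambda>t s'. table_inv (Suc m) s' \<and> t \<le> 8)"
proof -
  have frame: "input_ok s" "fst s r_i = int m" "fst s r_row = int (m div w)" "fst s r_col = int (m mod w)"
    and tables: "\<forall>m'<m. snd s (ad arr_row (int m')) = int (m' div w) \<and>
      snd s (ad arr_col (int m')) = int (m' mod w)"
    and fuel: "fst s r_hi = int (\<Sum>m'<m. y0 (cell_of m'))"
    using inv unfolding table_inv_def by blast+
  have y: "snd s (2 + fst s r_n + int m) = int (y0 (cell_of m))"
    using input_ok_y[OF frame(1) in_region_cell_of[OF m]] by simp
  have w: "fst s r_w = int w" "0 \<le> fst s r_n" using frame(1) by (simp_all add: input_ok_def)
  then have input_not_array: "\<And>j x. 0 \<le> x \<Longrightarrow> 2 + fst s r_n + int m \<noteq> ad j x"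
    using ad_neg by (metis add_nonneg_nonneg le_less_trans not_le of_nat_0_le_iff zero_le_numeral)
  show ?thesis
  proof (cases "Suc (m mod w) = w")
    case True
    then have "Suc m div w = Suc (m div w)" "Suc m mod w = 0"
      by (simp_all add: div_Suc mod_Suc)
    with frame tables fuel y w True m input_not_array show ?thesis
      unfolding table_step_com_def table_inv_def by (auto simp: less_Suc_eq)
  next
    case False
    then have "Suc m div w = m div w" "Suc m mod w = Suc (m mod w)" "int (m mod w) + 1 \<noteq> int w"
      using two_columns by (simp_all add: div_Suc mod_Suc)
    with frame tables fuel y w False m input_not_array show ?thesis
      unfolding table_step_com_def table_inv_def by (auto simp: less_Suc_eq)
  qed
qed

lemma table_correct:
  assumes "input_ok s"
  shows "runs table_com s (\<lambda>t s'. input_ok s' \<and> coords_ok s' \<and>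
    fst s' r_hi = int (\<Sum>m<n. y0 (cell_of m)) \<and> t \<le> 9 * n + 5)"
proof -
  define s0 where "s0 = ((fst s)(r_i := 0, r_row := 0, r_col := 0, r_hi := 0), snd s)"
  have "table_inv 0 s0" using assms by (simp add: table_inv_def s0_def)
  then have loop: "runs (While (Less (Reg r_i) (Reg r_n)) table_step_com) s0
      (\<lambda>t s'. table_inv n s' \<and> t \<le> (8 + 1) * n + 1)"
  proof (rule runs_for_loop)
    fix m s assume "table_inv m s"
    then show "fst s r_i = int m \<and> fst s r_n = int n \<and> m \<le> n"
      by (simp add: table_inv_def input_ok_def)
  qed (rule table_step_correct)
  show ?thesis
    unfolding table_com_def runs_Seq runs_Assign
  proof (simp only: prod.collapse fst_conv snd_conv aval.simps s0_def[symmetric], rule runs_mono[OF loop])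
    fix t s' assume "table_inv n s' \<and> t \<le> (8 + 1) * n + 1"
    then show "input_ok s' \<and> coords_ok s' \<and> fst s' r_hi = int (\<Sum>m<n. y0 (cell_of m)) \<and>
        1 + (1 + (1 + (1 + t))) \<le> 9 * n + 5"
      unfolding table_inv_def coords_ok_def by auto
  qed
qed

definition input_loaded :: "state \<Rightarrow> bool" where
  "input_loaded s \<longleftrightarrow>
     (\<forall>m<n. snd s (2 + int m) = int (x0 (cell_of m)) \<and> snd s (2 + int n + int m) = int (y0 (cell_of m)))"

definition size_inv :: "nat \<Rightarrow> state \<Rightarrow> bool" where
  "size_inv i s \<longleftrightarrow> fst s r_h = int h \<and> fst s r_w = int w \<and> input_loaded s \<and> i \<le> h \<and>
     fst s r_row = int i \<and> fst s r_n = int (i * w)"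

lemma size_correct:
  assumes "fst s r_h = int h" "fst s r_w = int w" "input_loaded s"
  shows "runs size_com s (\<lambda>t s'. input_ok s' \<and> t \<le> 3 * h + 3)"
proof -
  define s0 where "s0 = ((fst s)(r_row := 0, r_n := 0), snd s)"
  have "size_inv 0 s0" using assms by (simp add: size_inv_def s0_def input_loaded_def)
  then have loop: "runs (While (Less (Reg r_row) (Reg r_h))
        (Seq (Assign r_n (Add (Reg r_n) (Reg r_w))) (Assign r_row (Add (Reg r_row) (Num 1))))) s0
      (\<lambda>t s'. size_inv h s' \<and> t \<le> (2 + 1) * h + 1)"
  proof (rule runs_for_loop)
    fix i s assume "size_inv i s"
    then show "fst s r_row = int i \<and> fst s r_h = int h \<and> i \<le> h"
      by (simp add: size_inv_def)
  next
    fix i s assume "size_inv i s" "i < h"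
    then show "runs (Seq (Assign r_n (Add (Reg r_n) (Reg r_w))) (Assign r_row (Add (Reg r_row) (Num 1)))) s
        (\<lambda>t s'. size_inv (Suc i) s' \<and> t \<le> 2)"
      by (simp add: size_inv_def input_loaded_def algebra_simps)
  qed
  show ?thesis
    unfolding size_com_def runs_Seq runs_Assign
  proof (simp only: prod.collapse fst_conv snd_conv aval.simps s0_def[symmetric], rule runs_mono[OF loop])
    fix t s' assume "size_inv h s' \<and> t \<le> (2 + 1) * h + 1"
    then show "input_ok s' \<and> 1 + (1 + t) \<le> 3 * h + 3"
      unfolding size_inv_def input_ok_def input_loaded_def by auto
  qed
qed

definition total_fuel :: nat where
  "total_fuel = (\<Sum>c\<in>R. y0 c)"

lemma total_fuel_eq: "total_fuel = (\<Sum>m<n. y0 (cell_of m))"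
  unfolding total_fuel_def cell_of_image[symmetric] by (simp add: sum.reindex inj_on_cell_of)

lemma Y_bound_le_total_fuel: "Y_bound h w y0 \<le> total_fuel"
proof -
  have "(0, 0) \<in> R" using one_row two_columns by (simp add: in_region_def)
  then have "R \<noteq> {}" by blast
  moreover have "{(\<Sum>d\<in>nbrs h w c. y0 d) | c. in_region h w c} = (\<lambda>c. \<Sum>d\<in>nbrs h w c. y0 d) ` R"
    by auto
  moreover have "\<forall>c\<in>R. (\<Sum>d\<in>nbrs h w c. y0 d) \<le> total_fuel"
    unfolding total_fuel_def using finite_region by (auto intro!: sum_mono2 simp: nbrs_def)
  ultimately show ?thesis
    unfolding Y_bound_def using finite_region by (simp add: Max_le_iff)
qed

lemma total_fuel_le: "total_fuel \<le> n * Y_bound h w y0"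
proof -
  have "y0 c \<le> Y_bound h w y0" if c: "in_region h w c" for c
  proof -
    obtain i j where ij: "c = (i, j)" by (cases c)
    define d where "d = (if j + 1 < w then (i, j + 1) else (i, j - 1))"
    have d: "in_region h w d"
      using c two_columns by (auto simp: d_def ij in_region_def)
    have "c \<in> nbrs h w d"
      using c two_columns unfolding d_def ij nbrs_def hex_adj_def in_region_def by auto
    then have "y0 c \<le> (\<Sum>e\<in>nbrs h w d. y0 e)"
      by (intro member_le_sum) auto
    also have "\<dots> \<le> Y_bound h w y0"
      using nbrs_fuel_le_Y_bound[OF d] .
    finally show ?thesis .
  qed
  then have "total_fuel \<le> (\<Sum>c\<in>R. Y_bound h w y0)"
    unfolding total_fuel_def by (intro sum_mono) auto
  then show ?thesis
    by (simp add: card_region mult.commute)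
qed

lemma main_correct:
  assumes "fst s r_h = int h" "fst s r_w = int w" "input_loaded s"
  shows "runs main_com s (\<lambda>t s'. fst s' r_lo = int (LEAST k. safe_raise h w x0 y0 k) \<and>
    t \<le> 3 * h + 3 + (9 * n + 5) + ((79 * n + 12) * bits total_fuel + 2))"
  unfolding main_com_def runs_Seq
proof (rule runs_mono[OF size_correct[OF assms]], elim conjE)
  fix t1 s1 assume s1: "input_ok s1" and t1: "t1 \<le> 3 * h + 3"
  show "runs table_com s1 (\<lambda>t2 s2. runs bsearch_com s2 (\<lambda>t3 s3.
      fst s3 r_lo = int (LEAST k. safe_raise h w x0 y0 k) \<and>
      t1 + (t2 + t3) \<le> 3 * h + 3 + (9 * n + 5) + ((79 * n + 12) * bits total_fuel + 2)))"
  proof (rule runs_mono[OF table_correct[OF s1]], elim conjE)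
    fix t2 s2 assume "input_ok s2" "coords_ok s2" "fst s2 r_hi = int (\<Sum>m<n. y0 (cell_of m))"
      and t2: "t2 \<le> 9 * n + 5"
    moreover have "safe_raise h w x0 y0 total_fuel"
      using safe_raise_mono[OF Y_bound_le_total_fuel safe_raise_Y_bound[OF two_columns]] .
    ultimately show "runs bsearch_com s2 (\<lambda>t3 s3. fst s3 r_lo = int (LEAST k. safe_raise h w x0 y0 k) \<and>
        t1 + (t2 + t3) \<le> 3 * h + 3 + (9 * n + 5) + ((79 * n + 12) * bits total_fuel + 2))"
      using t1 by (intro runs_mono[OF bsearch_correct]) (auto simp: total_fuel_eq)
  qed
qed

end

lemma input_state_x:
  assumes "m < h * w"
  shows "snd (input_state h w x0 y0) (2 + int m) = int (x0 (m div w, m mod w))"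
proof -
  have "int m < int (h * w)" using assms by linarith
  then show ?thesis unfolding input_state_def Let_def by simp
qed

lemma input_state_y:
  assumes "m < h * w"
  shows "snd (input_state h w x0 y0) (2 + int (h * w) + int m) = int (y0 (m div w, m mod w))"
proof -
  have "int m < int (h * w)" using assms by linarith
  then show ?thesis unfolding input_state_def Let_def by simp
qed

lemma input_state_size: "snd (input_state h w x0 y0) 0 = int h" "snd (input_state h w x0 y0) 1 = int w"
  "fst (input_state h w x0 y0) = (\<lambda>_. 0)"
  by (auto simp: input_state_def)

lemma fire_prog_single_column:
  assumes "1 \<le> h"
  shows "runs fire_prog (input_state h 1 x0 y0) (\<lambda>t s. fst s r_lo = int (min_protect_k h 1 x0 y0) \<and> t = 4)"
  using input_state_size min_protect_k_single_column[OF assms] by (simp add: fire_prog_def)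

lemma add_one_le_three_mult:
  fixes a b :: real
  assumes "1 \<le> a" "1 \<le> b"
  shows "a + b + 1 \<le> 3 * a * b"
proof -
  have "a * 1 \<le> a * b" "1 * b \<le> a * b"
    using assms by (intro mult_left_mono mult_right_mono; simp)+
  with assms have "a + b + 1 \<le> 3 * (a * b)" by linarith
  then show ?thesis by (simp add: mult.assoc)
qed

context ram_input
begin

lemma input_loaded_input_state:
  "input_loaded ((fst (input_state h w x0 y0))(r_h := int h, r_w := int w), snd (input_state h w x0 y0))"
  unfolding input_loaded_def cell_of_def snd_conv
proof (intro allI impI conjI)
  fix m assume "m < n"
  then show "snd (input_state h w x0 y0) (2 + int m) = int (x0 (m div w, m mod w))"
    and "snd (input_state h w x0 y0) (2 + int n + int m) = int (y0 (m div w, m mod w))"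
    by (rule input_state_x, rule input_state_y)
qed

lemma fire_prog_correct:
  "runs fire_prog (input_state h w x0 y0) (\<lambda>t s. fst s r_lo = int (min_protect_k h w x0 y0) \<and>
     t \<le> 25 * n + 91 * n * bits total_fuel)"
proof -
  have "runs main_com
      ((fst (input_state h w x0 y0))(r_h := int h, r_w := int w), snd (input_state h w x0 y0))
      (\<lambda>t s. fst s r_lo = int (LEAST k. safe_raise h w x0 y0 k) \<and>
        t \<le> 3 * h + 3 + (9 * n + 5) + ((79 * n + 12) * bits total_fuel + 2))"
    by (rule main_correct[OF _ _ input_loaded_input_state]) simp_all
  then have "runs fire_prog (input_state h w x0 y0) (\<lambda>t s. fst s r_lo = int (min_protect_k h w x0 y0) \<and>
      t \<le> 3 + (3 * h + 3 + (9 * n + 5) + ((79 * n + 12) * bits total_fuel + 2)))"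
    unfolding fire_prog_def min_protect_k_eq_Least_safe_raise[OF two_columns one_row]
    using two_columns input_state_size by (simp add: fun_upd_twist)
  moreover have "3 + (3 * h + 3 + (9 * n + 5) + ((79 * n + 12) * bits total_fuel + 2))
      \<le> 25 * n + 91 * n * bits total_fuel"
  proof -
    have "2 \<le> n" "h \<le> n"
      using mult_le_mono[OF one_row two_columns] two_columns by simp_all
    moreover have "bits total_fuel \<le> n * bits total_fuel"
      using \<open>2 \<le> n\<close> by (metis le_trans mult_le_mono1 nat_mult_1 one_le_numeral)
    moreover have "(79 * n + 12) * bits total_fuel = 79 * (n * bits total_fuel) + 12 * bits total_fuel"
      "91 * n * bits total_fuel = 91 * (n * bits total_fuel)"
      by (simp_all add: algebra_simps)
    ultimately show ?thesis
      by linarith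
  qed
  ultimately show ?thesis
    by (auto elim!: runs_mono)
qed

lemma bits_total_fuel_le:
  "real (bits total_fuel) \<le> 3 * log 2 (real (max 2 n)) * log 2 (real (max 2 (Y_bound h w y0)))"
  (is "_ \<le> 3 * ?a * ?b")
proof (cases "total_fuel = 0")
  case False
  then have Y: "1 \<le> Y_bound h w y0"
    using total_fuel_le by (metis less_one mult_0_right not_less le_zero_eq)
  have n: "2 \<le> n" using mult_le_mono[OF one_row two_columns] by simp
  have "real (bits total_fuel) \<le> log 2 (real total_fuel) + 1"
    using bits_le_log False by simp
  also have "log 2 (real total_fuel) \<le> log 2 (real n * real (Y_bound h w y0))"
    using total_fuel_le False n Y one_row two_columns
    by (subst log_le_cancel_iff) (simp_all flip: of_nat_mult)
  also have "\<dots> = log 2 (real n) + log 2 (real (Y_bound h w y0))"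
    using n Y one_row two_columns by (intro log_mult_pos) simp_all
  also have "\<dots> \<le> ?a + ?b"
    using n Y by simp
  finally show ?thesis
    using add_one_le_three_mult[of ?a ?b] by simp
qed (simp add: bits.simps)

lemma fire_prog_runtime:
  "runs fire_prog (input_state h w x0 y0) (\<lambda>t s. fst s r_lo = int (min_protect_k h w x0 y0) \<and>
     real t \<le> 300 * real (max 2 n) * log 2 (real (max 2 n)) * log 2 (real (max 2 (Y_bound h w y0))))"
    (is "runs _ _ (\<lambda>t s. _ \<and> real t \<le> 300 * ?N * ?a * ?b)")
proof -
  have "2 \<le> n"
    using mult_le_mono[OF one_row two_columns] by simp
  then have n: "?N = real n" "1 \<le> real n"
    using one_row two_columns by (auto intro!: mult_ge1_I)
  have ab: "1 \<le> ?a * ?b"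
    by (intro mult_ge1_I) simp_all
  have "real (25 * n + 91 * n * bits total_fuel) \<le> 25 * real n * (?a * ?b) + 91 * real n * (3 * ?a * ?b)"
    using mult_left_mono[OF ab, of "25 * real n"] mult_left_mono[OF bits_total_fuel_le, of "91 * real n"]
    by simp
  also have "\<dots> \<le> 300 * ?N * ?a * ?b"
    using n ab by (simp add: algebra_simps)
  finally have bound: "real (25 * n + 91 * n * bits total_fuel) \<le> 300 * ?N * ?a * ?b" .
  show ?thesis
  proof (rule runs_mono[OF fire_prog_correct], elim conjE, intro conjI)
    fix t :: nat and s assume "t \<le> 25 * n + 91 * n * bits total_fuel"
    then have "real t \<le> real (25 * n + 91 * n * bits total_fuel)"
      by (rule of_nat_le_iff[THEN iffD2])
    then show "real t \<le> 300 * ?N * ?a * ?b"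
      using bound by (rule order_trans)
  qed
qed

end

lemma fire_prog_runs_within_bound:
  assumes "1 \<le> h" "1 \<le> w"
  shows "runs fire_prog (input_state h w x0 y0) (\<lambda>t s. fst s r_lo = int (min_protect_k h w x0 y0) \<and>
    real t \<le> 300 * real (max 2 (h * w)) * log 2 (real (max 2 (h * w)))
      * log 2 (real (max 2 (Y_bound h w y0))))"
proof (cases "w = 1")
  case True
  with assms have "runs fire_prog (input_state h w x0 y0)
      (\<lambda>t s. fst s r_lo = int (min_protect_k h w x0 y0) \<and> t = 4)"
    using fire_prog_single_column by simp
  moreover have
    "1 \<le> real (max 2 (h * w)) * log 2 (real (max 2 (h * w))) * log 2 (real (max 2 (Y_bound h w y0)))"
    by (intro mult_ge1_I) simp_all
  ultimately show ?thesis
    by (auto elim!: runs_mono)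
next
  case False
  with assms interpret ram_input h w x0 y0
    by unfold_locales auto
  show ?thesis by (rule fire_prog_runtime)
qed

theorem theorem1:
  shows "\<exists>P :: com. \<exists>C :: real. \<forall>h w (x0 :: cell \<Rightarrow> nat) (y0 :: cell \<Rightarrow> nat).
    1 \<le> h \<and> 1 \<le> w \<longrightarrow>
    (\<exists>t s. big_step P (input_state h w x0 y0) t s \<and>
       fst s 0 = int (min_protect_k h w x0 y0) \<and>
       real t \<le> C * real (max 2 (h * w)) * log 2 (real (max 2 (h * w)))
                  * log 2 (real (max 2 (Y_bound h w y0))))"
  using fire_prog_runs_within_bound unfolding runs_def by blast

end
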